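(* Let $d_1,d_2,d_3\ge2$, let $\rho$ be a density operator on $\mathbb{C}^{d_1}\otimes\mathbb{C}^{d_2}\otimes\mathbb{C}^{d_3}$, let $(f,g,h)$ be a permutation of $(1,2,3)$, and let $\alpha,\beta\in\mathbb{R}$. If $\rho$ is separable under the bipartition $f|gh$, then $$\|N^{f|gh}\|_{tr}\le\sqrt{d_f-1}\left(|\alpha|\sqrt{d_g-1}+|\beta|\sqrt{d_gd_h\Big(1-\frac{1}{d_g^2}-\frac{1}{d_h^2}\Big)+1}\right).$$
   Context: Generalized Pauli operators: for an integer $d\ge2$, let $\omega$ be a fixed primitive $d$-th root of unity and $E_{m,j}$ the $d\times d$ matrix units (indices modulo $d$). Writing $u\in\{0,\dots,d^2-1\}$ uniquely as $u=di+j$ with $0\le i,j\le d-1$, set $A_u=\sum_{m=0}^{d-1}\omega^{im}E_{m,m+j}$; so $A_0=I_d$ and $\operatorname{tr}(A_uA_v^\dagger)=d\delta_{uv}$. $A^{(s)}_u$ denotes these for $d=d_s$. The coefficients of $\rho$ are $t_{u_1,u_2,u_3}=\operatorname{tr}\big(\rho\,(A^{(1)}_{u_1})^\dagger\otimes(A^{(2)}_{u_2})^\dagger\otimes(A^{(3)}_{u_3})^\dagger\big)$, so $\rho=\frac{1}{d_1d_2d_3}\sum t_{u_1,u_2,u_3}A^{(1)}_{u_1}\otimes A^{(2)}_{u_2}\otimes A^{(3)}_{u_3}$. Matrices: for $(f,g,h)$ a permutation of $(1,2,3)$, $S^{f|g}$ is the $(d_f^2-1)\times(d_g^2-1)$ matrix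 with rows indexed by $u_f\in\{1,\dots,d_f^2-1\}$, columns by $u_g\in\{1,\dots,d_g^2-1\}$, whose entry is the coefficient $t_{u_1,u_2,u_3}$ with index $u_f$ in position $f$, $u_g$ in position $g$ and $0$ in position $h$. $S_0^{f|g}=[S^{f|g}\ \ O]$ is the $(d_f^2-1)\times(d_g^2-1)(d_h^2-1)$ matrix obtained by appending the $(d_f^2-1)\times(d_g^2-1)(d_h^2-2)$ zero matrix. $S^{f|gh}$ is the $(d_f^2-1)\times(d_g^2-1)(d_h^2-1)$ matrix with rows indexed by $u_f\ge1$ and columns by pairs $(u_g,u_h)$ with $u_g,u_h\ge1$ (lexicographic order), whose entry is the coefficient with $u_f,u_g,u_h$ in positions $f,g,h$. Finally $N^{f|gh}=\alpha S_0^{f|g}+\beta S^{f|gh}$. $\rho$ is separable under $f|gh$ if $\rho=\sum_s p_s\rho^s_f\otimes\rho^s_{gh}$ (finite sum) with $p_s>0$, $\sum_sp_s=1$, $\rho^s_f$ density operators on the $f$-th factor and $\rho^s_{gh}$ density operators on the remaining two factors. $\|X\|_{tr}=\operatorname{tr}\sqrt{XX^\dagger}$ is the trace norm (sum of singular values). *)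

theory Defs
  imports "Jordan_Normal_Form.Matrix" "Jordan_Normal_Form.Char_Poly"
begin

definition mtrace :: "complex mat \<Rightarrow> complex" where
  "mtrace A = (\<Sum>i<dim_row A. A $$ (i, i))"

definition adj :: "complex mat \<Rightarrow> complex mat" where
  "adj A = mat (dim_col A) (dim_row A) (\<lambda>(i, j). cnj (A $$ (j, i)))"

definition kron :: "complex mat \<Rightarrow> complex mat \<Rightarrow> complex mat" where
  "kron A B = mat (dim_row A * dim_row B) (dim_col A * dim_col B)
     (\<lambda>(i, j). A $$ (i div dim_row B, j div dim_col B) * B $$ (i mod dim_row B, j mod dim_col B))"

definition density :: "nat \<Rightarrow> complex mat \<Rightarrow> bool" where
  "density n R \<longleftrightarrow> R \<in> carrier_mat n n \<and> adj R = R \<and>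
     (\<forall>v :: nat \<Rightarrow> complex. 0 \<le> Re (\<Sum>i<n. \<Sum>j<n. cnj (v i) * R $$ (i, j) * v j)) \<and>
     mtrace R = 1"

text \<open>Trace norm: sum of the singular values of X, i.e. the sum (with multiplicity)
  of the square roots of the eigenvalues of X X^dagger.\<close>
definition trace_norm :: "complex mat \<Rightarrow> real" where
  "trace_norm X = (let p = char_poly (X * adj X) in
     \<Sum>z\<in>{z. poly p z = 0}. real (order z p) * sqrt (Re z))"

definition prim_root :: "nat \<Rightarrow> complex \<Rightarrow> bool" where
  "prim_root d w \<longleftrightarrow> w ^ d = 1 \<and> (\<forall>k. 0 < k \<and> k < d \<longrightarrow> w ^ k \<noteq> 1)"

text \<open>Generalized Pauli operator A_u, u = d i + j:
  A_u = sum_m w^(i m) E_{m, m+j mod d}.\<close>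
definition pauli :: "nat \<Rightarrow> complex \<Rightarrow> nat \<Rightarrow> complex mat" where
  "pauli d w u = mat d d (\<lambda>(m, n).
     if n = (m + u mod d) mod d then w ^ ((u div d) * m) else 0)"

section \<open>Three-party setting. Factors are numbered 1,2,3; d s is the dimension of factor s,
  w s the chosen primitive (d s)-th root of unity.\<close>

definition totdim :: "(nat \<Rightarrow> nat) \<Rightarrow> nat" where
  "totdim d = d 1 * d 2 * d 3"

definition coord :: "(nat \<Rightarrow> nat) \<Rightarrow> nat \<Rightarrow> nat \<Rightarrow> nat" where
  "coord d k s = (if s = 1 then k div (d 2 * d 3)
                  else if s = 2 then (k div d 3) mod d 2 else k mod d 3)"

text \<open>Coefficient t_{u1,u2,u3}; the argument u maps a position s to u_s.\<close>
definition tcoef :: "(nat \<Rightarrow> nat) \<Rightarrow> (nat \<Rightarrow> complex) \<Rightarrow> complex mat \<Rightarrow> (nat \<Rightarrow> nat) \<Rightarrow> complex" where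
  "tcoef d w \<rho> u = mtrace (\<rho> * adj (kron (kron (pauli (d 1) (w 1) (u 1)) (pauli (d 2) (w 2) (u 2)))
                                          (pauli (d 3) (w 3) (u 3))))"

definition assign :: "nat \<Rightarrow> nat \<Rightarrow> nat \<Rightarrow> nat \<Rightarrow> nat \<Rightarrow> nat \<Rightarrow> nat \<Rightarrow> nat" where
  "assign f g h a b c = (\<lambda>s. if s = f then a else if s = g then b else if s = h then c else 0)"

definition S_fg :: "(nat \<Rightarrow> nat) \<Rightarrow> (nat \<Rightarrow> complex) \<Rightarrow> complex mat \<Rightarrow> nat \<Rightarrow> nat \<Rightarrow> nat \<Rightarrow> complex mat" where
  "S_fg d w \<rho> f g h = mat (d f ^ 2 - 1) (d g ^ 2 - 1)
     (\<lambda>(r, c). tcoef d w \<rho> (assign f g h (r + 1) (c + 1) 0))"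

definition S0_fg :: "(nat \<Rightarrow> nat) \<Rightarrow> (nat \<Rightarrow> complex) \<Rightarrow> complex mat \<Rightarrow> nat \<Rightarrow> nat \<Rightarrow> nat \<Rightarrow> complex mat" where
  "S0_fg d w \<rho> f g h = mat (d f ^ 2 - 1) ((d g ^ 2 - 1) * (d h ^ 2 - 1))
     (\<lambda>(r, c). if c < d g ^ 2 - 1 then S_fg d w \<rho> f g h $$ (r, c) else 0)"

text \<open>Columns indexed by pairs (u_g, u_h), u_g, u_h >= 1, in lexicographic order.\<close>
definition S_fgh :: "(nat \<Rightarrow> nat) \<Rightarrow> (nat \<Rightarrow> complex) \<Rightarrow> complex mat \<Rightarrow> nat \<Rightarrow> nat \<Rightarrow> nat \<Rightarrow> complex mat" where
  "S_fgh d w \<rho> f g h = mat (d f ^ 2 - 1) ((d g ^ 2 - 1) * (d h ^ 2 - 1))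
     (\<lambda>(r, c). tcoef d w \<rho> (assign f g h (r + 1) (c div (d h ^ 2 - 1) + 1) (c mod (d h ^ 2 - 1) + 1)))"

definition N_fgh :: "(nat \<Rightarrow> nat) \<Rightarrow> (nat \<Rightarrow> complex) \<Rightarrow> complex mat \<Rightarrow> nat \<Rightarrow> nat \<Rightarrow> nat \<Rightarrow> real \<Rightarrow> real \<Rightarrow> complex mat" where
  "N_fgh d w \<rho> f g h \<alpha> \<beta> =
     complex_of_real \<alpha> \<cdot>\<^sub>m S0_fg d w \<rho> f g h + complex_of_real \<beta> \<cdot>\<^sub>m S_fgh d w \<rho> f g h"

text \<open>Product state sigma_f (x) tau_{gh}, where tau acts on the two remaining factors
  a < b in their natural order C^{d a} (x) C^{d b}, placed into C^{d1}(x)C^{d2}(x)C^{d3}.\<close>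
definition embed_prod :: "(nat \<Rightarrow> nat) \<Rightarrow> nat \<Rightarrow> nat \<Rightarrow> nat \<Rightarrow> complex mat \<Rightarrow> complex mat \<Rightarrow> complex mat" where
  "embed_prod d f g h \<sigma> \<tau> = (let a = min g h; b = max g h in
     mat (totdim d) (totdim d) (\<lambda>(i, j).
       \<sigma> $$ (coord d i f, coord d j f) *
       \<tau> $$ (coord d i a * d b + coord d i b, coord d j a * d b + coord d j b)))"

definition separable_bip :: "(nat \<Rightarrow> nat) \<Rightarrow> nat \<Rightarrow> nat \<Rightarrow> nat \<Rightarrow> complex mat \<Rightarrow> bool" where
  "separable_bip d f g h \<rho> \<longleftrightarrow>
     (\<exists>(n :: nat) (p :: nat \<Rightarrow> real) (\<sigma> :: nat \<Rightarrow> complex mat) (\<tau> :: nat \<Rightarrow> complex mat).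
        (\<forall>s<n. p s > 0 \<and> density (d f) (\<sigma> s) \<and> density (d g * d h) (\<tau> s)) \<and>
        (\<Sum>s<n. p s) = 1 \<and>
        \<rho> = mat (totdim d) (totdim d) (\<lambda>(i, j).
               \<Sum>s<n. complex_of_real (p s) * embed_prod d f g h (\<sigma> s) (\<tau> s) $$ (i, j)))"

end

(* Write rho = sum_s p_s sigma_s (x) tau_s. The Pauli coefficients of a product state factor, so
   N^{f|gh} = sum_s p_s x_s z_s^T is a convex combination of rank-one matrices: x_s collects the
   nontrivial Pauli coefficients of sigma_s, and z_s = alpha (y_s(.,0), 0) + beta y_s(.,.) those of
   tau_s. The trace norm of a rank-one matrix is the product of the Euclidean norms of its factors,
   so ||N||_tr <= max_s |x_s| |z_s|.
   Parseval's identity for the Pauli basis gives sum_u |tr (R A_u^dagger)|^2 = d tr (R R^dagger). Since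
   the u = 0 coefficient of a state is its trace 1 and tr sigma^2 <= 1, we get |x_s|^2 <= d_f - 1. For
   tau with purity T and marginal purities P_g, P_h, the same identity gives
   |y(.,0)|^2 = d_g P_g - 1 <= d_g - 1 and |y(.,.)|^2 = d_g d_h T - d_g P_g - d_h P_h + 1, and the
   purity bounds T <= 1, T <= d_h P_g, T <= d_g P_h turn the latter into
   d_g d_h (1 - 1/d_g^2 - 1/d_h^2) + 1. Minkowski's inequality combines the alpha and beta parts. *)

theory Submission
  imports Defs "HOL-Analysis.L2_Norm" "Jordan_Normal_Form.Schur_Decomposition"
begin

section \<open>Inner products and Hermitian matrices\<close>

definition cinner :: "nat \<Rightarrow> (nat \<Rightarrow> complex) \<Rightarrow> (nat \<Rightarrow> complex) \<Rightarrow> complex" where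
  "cinner n x y = (\<Sum>i<n. x i * cnj (y i))"

definition mat_apply :: "nat \<Rightarrow> complex mat \<Rightarrow> (nat \<Rightarrow> complex) \<Rightarrow> nat \<Rightarrow> complex" where
  "mat_apply n A x i = (\<Sum>j<n. A $$ (i, j) * x j)"

definition hermitian :: "nat \<Rightarrow> complex mat \<Rightarrow> bool" where
  "hermitian n A \<longleftrightarrow> A \<in> carrier_mat n n \<and> (\<forall>i<n. \<forall>j<n. A $$ (i, j) = cnj (A $$ (j, i)))"

definition orthonormal :: "nat \<Rightarrow> nat \<Rightarrow> (nat \<Rightarrow> nat \<Rightarrow> complex) \<Rightarrow> bool" where
  "orthonormal n k u \<longleftrightarrow> (\<forall>a<k. \<forall>b<k. cinner n (u a) (u b) = (if a = b then 1 else 0))"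

lemma cinner_cong:
  "(\<And>i. i < n \<Longrightarrow> x i = x' i) \<Longrightarrow> (\<And>i. i < n \<Longrightarrow> y i = y' i) \<Longrightarrow> cinner n x y = cinner n x' y'"
  unfolding cinner_def by (auto intro!: sum.cong)

lemma cinner_add_left: "cinner n (\<lambda>i. x i + y i) z = cinner n x z + cinner n y z"
  unfolding cinner_def by (simp add: distrib_right sum.distrib)

lemma cinner_diff_left: "cinner n (\<lambda>i. x i - y i) z = cinner n x z - cinner n y z"
  unfolding cinner_def by (simp add: left_diff_distrib sum_subtractf)

lemma cinner_diff_right: "cinner n x (\<lambda>i. y i - z i) = cinner n x y - cinner n x z"
  unfolding cinner_def by (simp add: right_diff_distrib sum_subtractf)

lemma cinner_scale_left: "cinner n (\<lambda>i. c * x i) z = c * cinner n x z"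
  unfolding cinner_def by (simp add: sum_distrib_left mult.assoc)

lemma cinner_scale_right: "cinner n x (\<lambda>i. c * z i) = cnj c * cinner n x z"
  unfolding cinner_def by (simp add: sum_distrib_left algebra_simps)

lemma cinner_sum_left: "cinner n (\<lambda>i. \<Sum>a\<in>S. f a i) z = (\<Sum>a\<in>S. cinner n (f a) z)"
  unfolding cinner_def by (simp add: sum_distrib_right) (rule sum.swap)

lemma cnj_cinner: "cnj (cinner n x y) = cinner n y x"
  unfolding cinner_def by (simp add: mult.commute)

lemma cinner_sum_right: "cinner n z (\<lambda>i. \<Sum>a\<in>S. f a i) = (\<Sum>a\<in>S. cinner n z (f a))"
  using arg_cong[OF cinner_sum_left[of n f S z], of cnj] by (simp add: cnj_cinner)

lemma norm_cinner_commute: "cmod (cinner n x y) = cmod (cinner n y x)"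
  by (metis complex_mod_cnj cnj_cinner)

lemma cinner_self: "cinner n x x = of_real (\<Sum>i<n. (cmod (x i))\<^sup>2)"
  unfolding cinner_def by (simp add: complex_norm_square[symmetric])

lemma Re_cinner_self_nonneg: "0 \<le> Re (cinner n x x)"
  by (simp add: cinner_self sum_nonneg)

lemma cinner_self_eq_0D:
  assumes "cinner n x x = 0" "i < n"
  shows "x i = 0"
proof -
  have "(\<Sum>j<n. (cmod (x j))\<^sup>2) = 0" using assms(1) unfolding cinner_self by (simp only: of_real_eq_0_iff)
  then have "\<forall>j\<in>{..<n}. (cmod (x j))\<^sup>2 = 0" by (subst sum_nonneg_eq_0_iff[symmetric]) auto
  with assms(2) show ?thesis by auto
qed

lemma hermitian_cinner:
  assumes "hermitian n A"
  shows "cinner n (mat_apply n A x) y = cinner n x (mat_apply n A y)"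
proof -
  have h: "\<And>i j. i < n \<Longrightarrow> j < n \<Longrightarrow> cnj (A $$ (j, i)) = A $$ (i, j)"
    using assms unfolding hermitian_def by (metis complex_cnj_cnj)
  have "cinner n (mat_apply n A x) y = (\<Sum>j<n. \<Sum>i<n. A $$ (i, j) * x j * cnj (y i))"
    unfolding cinner_def mat_apply_def by (simp add: sum_distrib_right) (rule sum.swap)
  also have "\<dots> = (\<Sum>j<n. \<Sum>i<n. x j * cnj (A $$ (j, i) * y i))"
    by (intro sum.cong refl) (simp add: h)
  also have "\<dots> = cinner n x (mat_apply n A y)"
    unfolding cinner_def mat_apply_def by (simp add: sum_distrib_left)
  finally show ?thesis .
qed

lemma mat_apply_cong: "(\<And>i. i < n \<Longrightarrow> x i = x' i) \<Longrightarrow> mat_apply n A x j = mat_apply n A x' j"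
  unfolding mat_apply_def by (auto intro!: sum.cong)

lemma mat_apply_mult:
  assumes "X \<in> carrier_mat n n" "Y \<in> carrier_mat n n" "i < n"
  shows "mat_apply n (X * Y) x i = mat_apply n X (mat_apply n Y x) i"
proof -
  have "mat_apply n (X * Y) x i = (\<Sum>j<n. (\<Sum>l<n. X $$ (i, l) * Y $$ (l, j)) * x j)"
    unfolding mat_apply_def using assms by (auto intro!: sum.cong simp: scalar_prod_def atLeast0LessThan)
  also have "\<dots> = (\<Sum>l<n. X $$ (i, l) * (\<Sum>j<n. Y $$ (l, j) * x j))"
    by (simp add: sum_distrib_left sum_distrib_right mult.assoc) (rule sum.swap)
  finally show ?thesis unfolding mat_apply_def .
qed

lemma mat_apply_add:
  assumes "X \<in> carrier_mat n n" "Y \<in> carrier_mat n n" "i < n"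
  shows "mat_apply n (X + Y) x i = mat_apply n X x i + mat_apply n Y x i"
  unfolding mat_apply_def using assms by (simp add: distrib_right sum.distrib)

lemma mat_apply_smult:
  assumes "X \<in> carrier_mat n n" "i < n"
  shows "mat_apply n (c \<cdot>\<^sub>m X) x i = c * mat_apply n X x i"
  unfolding mat_apply_def using assms by (simp add: sum_distrib_left mult.assoc)

lemma mat_apply_one:
  assumes "i < n"
  shows "mat_apply n (1\<^sub>m n) x i = x i"
proof -
  have "mat_apply n (1\<^sub>m n) x i = (\<Sum>j<n. if i = j then x j else 0)"
    unfolding mat_apply_def using assms by (intro sum.cong) auto
  also have "\<dots> = x i" using assms by (subst sum.delta') auto
  finally show ?thesis .
qed

lemma mult_mat_vec_eq_mat_apply:
  assumes "N \<in> carrier_mat n n" "v \<in> carrier_vec n" "i < n"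
  shows "(N *\<^sub>v v) $ i = mat_apply n N (\<lambda>j. v $ j) i"
  using assms by (auto simp: mat_apply_def scalar_prod_def atLeast0LessThan intro!: sum.cong)

lemma mtrace_mult_comm:
  fixes A B :: "complex mat"
  assumes "A \<in> carrier_mat n m" "B \<in> carrier_mat m n"
  shows "mtrace (A * B) = mtrace (B * A)"
proof -
  have "mtrace (A * B) = (\<Sum>i<n. \<Sum>j<m. A $$ (i, j) * B $$ (j, i))"
    using assms by (auto simp: mtrace_def scalar_prod_def atLeast0LessThan intro!: sum.cong)
  also have "\<dots> = (\<Sum>j<m. \<Sum>i<n. B $$ (j, i) * A $$ (i, j))"
    by (subst sum.swap) (simp add: mult.commute)
  also have "\<dots> = mtrace (B * A)"
    using assms by (auto simp: mtrace_def scalar_prod_def atLeast0LessThan intro!: sum.cong)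
  finally show ?thesis .
qed

lemma mtrace_similar:
  assumes "similar_mat_wit A B P Q" "A \<in> carrier_mat n n"
  shows "mtrace A = mtrace B"
proof -
  from assms have c: "B \<in> carrier_mat n n" "P \<in> carrier_mat n n" "Q \<in> carrier_mat n n"
    and QP: "Q * P = 1\<^sub>m n" and A: "A = P * (B * Q)"
    unfolding similar_mat_wit_def Let_def by (auto simp: assoc_mult_mat[of P n n B n Q n])
  have "mtrace (P * (B * Q)) = mtrace ((B * Q) * P)"
    by (rule mtrace_mult_comm) (use c in auto)
  also have "(B * Q) * P = B"
    using c QP by (simp add: assoc_mult_mat[of B n n Q n P n])
  finally show ?thesis unfolding A .
qed

lemma mtrace_eq_sum_eigenvalues:
  fixes A :: "complex mat"
  assumes A: "A \<in> carrier_mat n n" and cp: "char_poly A = (\<Prod>a\<leftarrow>as. [:- a, 1:])"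
  shows "mtrace A = sum_list as"
proof -
  obtain B P Q where "schur_decomposition A as = (B, P, Q)"
    by (cases "schur_decomposition A as") auto
  from schur_decomposition[OF A cp this]
  have sim: "similar_mat_wit A B P Q" and diag: "diag_mat B = as" by auto
  from sim A have "B \<in> carrier_mat n n" unfolding similar_mat_wit_def Let_def by auto
  then have "sum_list as = mtrace B"
    unfolding diag[symmetric] diag_mat_def mtrace_def
    by (simp add: sum_list_sum_nth atLeast0LessThan)
  with mtrace_similar[OF sim A] show ?thesis by simp
qed

lemma eigenvector_with_eigenvalue_ne:
  assumes M: "M \<in> carrier_mat n n" and tr: "mtrace M \<noteq> of_nat n * t"
  obtains \<mu> x where "\<mu> \<noteq> t" "\<exists>i<n. x i \<noteq> 0" "\<And>i. i < n \<Longrightarrow> mat_apply n M x i = \<mu> * x i"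
proof -
  obtain as where cp: "char_poly M = (\<Prod>a\<leftarrow>as. [:- a, 1:])" and len: "length as = n"
    using char_poly_factorized[OF M] by blast
  have "\<exists>\<mu>\<in>set as. \<mu> \<noteq> t"
  proof (rule ccontr)
    assume "\<not> ?thesis"
    then have "as = replicate n t" using len by (metis replicate_length_same)
    then show False using mtrace_eq_sum_eigenvalues[OF M cp] tr by (simp add: sum_list_replicate)
  qed
  then obtain \<mu> where "\<mu> \<in> set as" and \<mu>: "\<mu> \<noteq> t" by blast
  then have "poly (char_poly M) \<mu> = 0" unfolding cp by (simp add: poly_prod_list_zero_iff)
  then have "eigenvector M (find_eigenvector M \<mu>) \<mu>"
    by (intro find_eigenvector[OF M]) (simp add: eigenvalue_root_char_poly[OF M])
  then obtain v where v: "v \<in> carrier_vec n" "v \<noteq> 0\<^sub>v n" "M *\<^sub>v v = \<mu> \<cdot>\<^sub>v v"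
    unfolding eigenvector_def using M by auto
  show ?thesis
  proof
    show "\<exists>i<n. v $ i \<noteq> 0"
    proof (rule ccontr)
      assume "\<not> (\<exists>i<n. v $ i \<noteq> 0)"
      then have "v = 0\<^sub>v n" using v(1) by (intro eq_vecI) auto
      with v(2) show False ..
    qed
    show "mat_apply n M (\<lambda>j. v $ j) i = \<mu> * v $ i" if "i < n" for i
      using mult_mat_vec_eq_mat_apply[OF M v(1) that] v(1,3) that by simp
  qed (fact \<mu>)
qed

lemma hermitian_eigenvalue_real:
  assumes H: "hermitian n A" and x: "\<exists>i<n. x i \<noteq> 0"
    and eig: "\<And>i. i < n \<Longrightarrow> mat_apply n A x i = \<mu> * x i"
  shows "\<mu> = of_real (Re \<mu>)"
proof -
  have xx: "cinner n x x \<noteq> 0" using x cinner_self_eq_0D by blast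
  have "\<mu> * cinner n x x = cinner n (mat_apply n A x) x"
    unfolding cinner_scale_left[symmetric] using eig by (intro cinner_cong) auto
  also have "\<dots> = cinner n x (mat_apply n A x)" by (rule hermitian_cinner[OF H])
  also have "\<dots> = cnj \<mu> * cinner n x x"
    unfolding cinner_scale_right[symmetric] using eig by (intro cinner_cong) auto
  finally have "\<mu> = cnj \<mu>" using xx by simp
  then have "Im \<mu> = 0" by (metis cnj.sel(2) equal_neg_zero)
  then show ?thesis by (simp add: complex_eq_iff)
qed

lemma cinner_divide_self:
  "cinner n (\<lambda>i. x i / of_real c) (\<lambda>i. x i / of_real c) = cinner n x x / of_real (c * c)"
proof -
  have "cinner n (\<lambda>i. x i / of_real c) (\<lambda>i. x i / of_real c) = (\<Sum>i<n. x i * cnj (x i) / of_real (c * c))"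
    unfolding cinner_def by (intro sum.cong refl) simp
  then show ?thesis unfolding cinner_def by (simp only: sum_divide_distrib)
qed

lemma cinner_normalize:
  assumes "\<exists>i<n. x i \<noteq> 0"
  obtains c :: real where "c > 0" "cinner n (\<lambda>i. x i / of_real c) (\<lambda>i. x i / of_real c) = 1"
proof -
  define s where "s = (\<Sum>i<n. (cmod (x i))\<^sup>2)"
  have "cinner n x x \<noteq> 0" using assms cinner_self_eq_0D by blast
  then have "s \<noteq> 0" unfolding cinner_self s_def by (metis of_real_0)
  moreover have "s \<ge> 0" unfolding s_def by (simp add: sum_nonneg)
  ultimately have s0: "s > 0" by simp
  then have "cinner n x x / of_real (sqrt s * sqrt s) = 1"
    unfolding cinner_self s_def[symmetric] by simp
  with s0 show ?thesis by (intro that[of "sqrt s"]) (simp_all add: cinner_divide_self)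
qed

section \<open>Spectral theorem for Hermitian matrices\<close>

definition proj :: "nat \<Rightarrow> nat \<Rightarrow> (nat \<Rightarrow> nat \<Rightarrow> complex) \<Rightarrow> (nat \<Rightarrow> complex) \<Rightarrow> nat \<Rightarrow> complex" where
  "proj n k u y = (\<lambda>i. \<Sum>a<k. cinner n y (u a) * u a i)"

definition proj_mat :: "nat \<Rightarrow> nat \<Rightarrow> (nat \<Rightarrow> nat \<Rightarrow> complex) \<Rightarrow> complex mat" where
  "proj_mat n k u = mat n n (\<lambda>(i, j). \<Sum>a<k. u a i * cnj (u a j))"

lemma proj_mat_carrier: "proj_mat n k u \<in> carrier_mat n n"
  unfolding proj_mat_def by simp

lemma mat_apply_proj_mat: "i < n \<Longrightarrow> mat_apply n (proj_mat n k u) y i = proj n k u y i"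
  unfolding mat_apply_def proj_mat_def proj_def cinner_def
  by (simp add: sum_distrib_left sum_distrib_right mult_ac) (rule sum.swap)

lemma mat_apply_one_minus_proj_mat:
  assumes "i < n"
  shows "mat_apply n (1\<^sub>m n - proj_mat n k u) y i = y i - proj n k u y i"
proof -
  have "mat_apply n (1\<^sub>m n - proj_mat n k u) y i = mat_apply n (1\<^sub>m n) y i - mat_apply n (proj_mat n k u) y i"
    unfolding mat_apply_def using assms proj_mat_carrier[of n k u]
    by (simp add: left_diff_distrib sum_subtractf)
  then show ?thesis using assms by (simp add: mat_apply_one mat_apply_proj_mat)
qed

lemma cinner_proj:
  assumes "orthonormal n k u" "b < k"
  shows "cinner n (proj n k u y) (u b) = cinner n y (u b)"
proof -
  have "cinner n (proj n k u y) (u b) = (\<Sum>a<k. cinner n y (u a) * cinner n (u a) (u b))"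
    unfolding proj_def by (simp add: cinner_sum_left cinner_scale_left)
  also have "\<dots> = (\<Sum>a<k. if a = b then cinner n y (u a) else 0)"
    using assms unfolding orthonormal_def by (intro sum.cong) auto
  finally show ?thesis using assms(2) by simp
qed

lemma proj_eq_0: "(\<And>a. a < k \<Longrightarrow> cinner n y (u a) = 0) \<Longrightarrow> proj n k u y = (\<lambda>i. 0)"
  unfolding proj_def by simp

lemma deflated_eigenvector:
  fixes u :: "nat \<Rightarrow> nat \<Rightarrow> complex" and lam :: "nat \<Rightarrow> real"
  assumes H: "hermitian n A" and orth: "orthonormal n k u"
    and eig: "\<And>a i. a < k \<Longrightarrow> i < n \<Longrightarrow> mat_apply n A (u a) i = of_real (lam a) * u a i"
    and x: "\<And>i. i < n \<Longrightarrow> mat_apply n ((1\<^sub>m n - proj_mat n k u) * A * (1\<^sub>m n - proj_mat n k u)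
              + t \<cdot>\<^sub>m proj_mat n k u) x i = \<mu> * x i"
    and \<mu>: "\<mu> \<noteq> t"
  shows "\<And>a. a < k \<Longrightarrow> cinner n x (u a) = 0" and "\<And>i. i < n \<Longrightarrow> mat_apply n A x i = \<mu> * x i"
proof -
  let ?R = "proj_mat n k u" and ?p = "proj n k u"
  have A: "A \<in> carrier_mat n n" using H unfolding hermitian_def by auto
  have R: "?R \<in> carrier_mat n n" and P: "1\<^sub>m n - ?R \<in> carrier_mat n n"
    using proj_mat_carrier[of n k u] by auto
  define z where "z = mat_apply n A (\<lambda>i. x i - ?p x i)"
  have x_eq: "z i - ?p z i + t * ?p x i = \<mu> * x i" if "i < n" for i
  proof -
    have "mat_apply n ((1\<^sub>m n - ?R) * A * (1\<^sub>m n - ?R)) x i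
        = mat_apply n ((1\<^sub>m n - ?R) * A) (mat_apply n (1\<^sub>m n - ?R) x) i"
      using P A that by (intro mat_apply_mult) auto
    also have "\<dots> = mat_apply n (1\<^sub>m n - ?R) (mat_apply n A (mat_apply n (1\<^sub>m n - ?R) x)) i"
      using P A that by (intro mat_apply_mult) auto
    also have "\<dots> = mat_apply n (1\<^sub>m n - ?R) z i"
      unfolding z_def by (intro mat_apply_cong) (simp add: mat_apply_one_minus_proj_mat cong: mat_apply_cong)
    also have "\<dots> = z i - ?p z i" using mat_apply_one_minus_proj_mat[OF that] .
    finally have "mat_apply n ((1\<^sub>m n - ?R) * A * (1\<^sub>m n - ?R)) x i = z i - ?p z i" .
    moreover have "(1\<^sub>m n - ?R) * A * (1\<^sub>m n - ?R) \<in> carrier_mat n n" using P A by auto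
    ultimately show ?thesis
      using x[OF that] R that by (simp add: mat_apply_add mat_apply_smult mat_apply_proj_mat)
  qed
  show x_orth: "cinner n x (u b) = 0" if "b < k" for b
  proof -
    have "cinner n (\<lambda>i. z i - ?p z i + t * ?p x i) (u b) = cinner n (\<lambda>i. \<mu> * x i) (u b)"
      using x_eq by (intro cinner_cong) auto
    then have "t * cinner n x (u b) = \<mu> * cinner n x (u b)"
      using cinner_proj[OF orth that]
      by (simp add: cinner_add_left cinner_diff_left cinner_scale_left)
    with \<mu> show ?thesis by simp
  qed
  then have proj_x: "?p x = (\<lambda>i. 0)" by (rule proj_eq_0)
  have "cinner n z (u b) = 0" if "b < k" for b
  proof -
    have "cinner n z (u b) = cinner n x (mat_apply n A (u b))"
      unfolding z_def proj_x by (simp add: hermitian_cinner[OF H])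
    also have "\<dots> = cinner n x (\<lambda>i. of_real (lam b) * u b i)"
      using eig[OF that] by (intro cinner_cong) auto
    finally show ?thesis using x_orth[OF that] by (simp add: cinner_scale_right)
  qed
  then have "?p z = (\<lambda>i. 0)" by (rule proj_eq_0)
  then show "mat_apply n A x i = \<mu> * x i" if "i < n" for i
    using x_eq[OF that] proj_x unfolding z_def by simp
qed

lemma hermitian_eigenvector_orthogonal:
  fixes u :: "nat \<Rightarrow> nat \<Rightarrow> complex" and lam :: "nat \<Rightarrow> real"
  assumes H: "hermitian n A" and kn: "k < n" and orth: "orthonormal n k u"
    and eig: "\<And>a i. a < k \<Longrightarrow> i < n \<Longrightarrow> mat_apply n A (u a) i = of_real (lam a) * u a i"
  obtains v \<mu> where "cinner n v v = 1" "\<And>a. a < k \<Longrightarrow> cinner n v (u a) = 0"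
    "\<And>i. i < n \<Longrightarrow> mat_apply n A v i = of_real \<mu> * v i"
proof -
  have A: "A \<in> carrier_mat n n" using H unfolding hermitian_def by auto
  define R where "R = proj_mat n k u"
  define P where "P = 1\<^sub>m n - R"
  define c where "c = mtrace (P * A * P)"
  \<comment> \<open>Any \<open>t\<close> with \<open>c + t * k \<noteq> n * t\<close> works: it forces an eigenvalue other than \<open>t\<close>.\<close>
  define t :: complex where "t = (if c = 0 then 1 else 0)"
  have R: "R \<in> carrier_mat n n" and P: "P \<in> carrier_mat n n"
    unfolding P_def R_def using proj_mat_carrier[of n k u] by auto
  have "mtrace R = (\<Sum>a<k. cinner n (u a) (u a))"
    unfolding R_def proj_mat_def mtrace_def cinner_def by (simp add: sum.swap[of _ "{..<n}"])
  also have "\<dots> = of_nat k" using orth unfolding orthonormal_def by simp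
  finally have "mtrace (P * A * P + t \<cdot>\<^sub>m R) = c + t * of_nat k"
    using P A R unfolding c_def mtrace_def by (simp add: sum.distrib flip: sum_distrib_left)
  also have "\<dots> \<noteq> of_nat n * t" using kn unfolding t_def by auto
  finally obtain \<mu> x where "\<mu> \<noteq> t" and x0: "\<exists>i<n. x i \<noteq> 0"
    and "\<And>i. i < n \<Longrightarrow> mat_apply n (P * A * P + t \<cdot>\<^sub>m R) x i = \<mu> * x i"
    using eigenvector_with_eigenvalue_ne[of "P * A * P + t \<cdot>\<^sub>m R" n t] P A R by auto
  from deflated_eigenvector[OF H orth eig this(3)[unfolded P_def R_def] this(1)]
  have x_orth: "\<And>a. a < k \<Longrightarrow> cinner n x (u a) = 0"
    and x_eig: "\<And>i. i < n \<Longrightarrow> mat_apply n A x i = \<mu> * x i" by blast+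
  have \<mu>_real: "\<mu> = of_real (Re \<mu>)" by (rule hermitian_eigenvalue_real[OF H x0 x_eig])
  obtain s :: real where "s > 0" and x1: "cinner n (\<lambda>i. x i / of_real s) (\<lambda>i. x i / of_real s) = 1"
    using cinner_normalize[OF x0] by blast
  show ?thesis
  proof (rule that[OF x1])
    show "cinner n (\<lambda>i. x i / of_real s) (u a) = 0" if "a < k" for a
      using cinner_scale_left[of n "inverse (of_real s)" x "u a"] x_orth[OF that]
      by (simp add: field_simps)
    show "mat_apply n A (\<lambda>i. x i / of_real s) i = of_real (Re \<mu>) * (x i / of_real s)" if "i < n" for i
      using x_eig[OF that] \<mu>_real unfolding mat_apply_def
      by (simp add: sum_divide_distrib[symmetric] times_divide_eq_right)
  qed
qed

lemma hermitian_orthonormal_eigenvectors: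
  assumes H: "hermitian n A"
  shows "k \<le> n \<Longrightarrow> \<exists>u lam. orthonormal n k u \<and>
     (\<forall>a<k. \<forall>i<n. mat_apply n A (u a) i = of_real (lam a) * u a i)"
proof (induction k)
  case 0
  show ?case by (auto simp: orthonormal_def)
next
  case (Suc k)
  then obtain u lam where orth: "orthonormal n k u"
    and eig: "\<forall>a<k. \<forall>i<n. mat_apply n A (u a) i = of_real (lam a) * u a i" by auto
  obtain v \<mu> where v: "cinner n v v = 1" "\<And>a. a < k \<Longrightarrow> cinner n v (u a) = 0"
    "\<And>i. i < n \<Longrightarrow> mat_apply n A v i = of_real \<mu> * v i"
    using hermitian_eigenvector_orthogonal[OF H _ orth] Suc eig by (metis Suc_le_lessD)
  have "cinner n (u a) v = 0" if "a < k" for a using v(2)[OF that] cnj_cinner by (metis complex_cnj_zero)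
  with orth v have "orthonormal n (Suc k) (u(k := v))"
    unfolding orthonormal_def by (auto simp: less_Suc_eq)
  moreover have "\<forall>a<Suc k. \<forall>i<n. mat_apply n A ((u(k := v)) a) i = of_real ((lam(k := \<mu>)) a) * (u(k := v)) a i"
    using eig v(3) by (auto simp: less_Suc_eq)
  ultimately show ?case by blast
qed

lemma orthonormal_unitary:
  assumes "orthonormal n n u"
  defines "U \<equiv> mat n n (\<lambda>(i, k). u k i)"
  shows "adj U * U = 1\<^sub>m n" and "U * adj U = 1\<^sub>m n"
proof -
  have U: "U \<in> carrier_mat n n" and aU: "adj U \<in> carrier_mat n n" unfolding U_def adj_def by auto
  show aUU: "adj U * U = 1\<^sub>m n"
  proof (rule eq_matI)
    fix a b assume ab: "a < dim_row (1\<^sub>m n)" "b < dim_col (1\<^sub>m n)"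
    have "(adj U * U) $$ (a, b) = cinner n (u b) (u a)"
      using ab U aU unfolding U_def adj_def cinner_def
      by (auto simp: scalar_prod_def atLeast0LessThan mult.commute intro!: sum.cong)
    also have "\<dots> = 1\<^sub>m n $$ (a, b)" using assms(1) ab unfolding orthonormal_def by auto
    finally show "(adj U * U) $$ (a, b) = 1\<^sub>m n $$ (a, b)" .
  qed (use U aU in auto)
  show "U * adj U = 1\<^sub>m n" using mat_mult_left_right_inverse[OF aU U aUU] .
qed

lemma orthonormal_eigenbasis_diagonalizes:
  assumes A: "A \<in> carrier_mat n n" and orth: "orthonormal n n u"
    and eig: "\<And>k i. k < n \<Longrightarrow> i < n \<Longrightarrow> mat_apply n A (u k) i = of_real (lam k) * u k i"
  defines "U \<equiv> mat n n (\<lambda>(i, k). u k i)"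
    and "D \<equiv> mat n n (\<lambda>(i, j). if i = j then complex_of_real (lam i) else 0)"
  shows "A = U * D * adj U"
proof -
  have U: "U \<in> carrier_mat n n" and aU: "adj U \<in> carrier_mat n n" and D: "D \<in> carrier_mat n n"
    unfolding U_def D_def adj_def by auto
  have AU: "A * U = U * D"
  proof (rule eq_matI)
    fix i k assume "i < dim_row (U * D)" "k < dim_col (U * D)"
    then have ik: "i < n" "k < n" using U D by auto
    have "(A * U) $$ (i, k) = mat_apply n A (u k) i"
      using ik A U unfolding U_def mat_apply_def
      by (auto simp: scalar_prod_def atLeast0LessThan intro!: sum.cong)
    also have "\<dots> = (\<Sum>l<n. if l = k then u l i * of_real (lam l) else 0)"
      using eig ik by (simp add: mult.commute)
    also have "\<dots> = (\<Sum>l<n. u l i * (if l = k then of_real (lam l) else 0))"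
      by (intro sum.cong) auto
    also have "\<dots> = (U * D) $$ (i, k)"
      using ik U D unfolding U_def D_def
      by (auto simp: scalar_prod_def atLeast0LessThan intro!: sum.cong)
    finally show "(A * U) $$ (i, k) = (U * D) $$ (i, k)" .
  qed (use A U D in auto)
  have "A = (A * U) * adj U"
    using orthonormal_unitary(2)[OF orth, folded U_def] A U aU by (simp add: assoc_mult_mat)
  then show ?thesis unfolding AU .
qed

theorem hermitian_spectral_decomposition:
  assumes H: "hermitian n A"
  obtains u lam where "orthonormal n n u"
    and "\<And>k i. k < n \<Longrightarrow> i < n \<Longrightarrow> mat_apply n A (u k) i = of_real (lam k) * u k i"
    and "\<And>i j. i < n \<Longrightarrow> j < n \<Longrightarrow> A $$ (i, j) = (\<Sum>k<n. of_real (lam k) * u k i * cnj (u k j))"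
    and "char_poly A = (\<Prod>k\<leftarrow>[0..<n]. [:- of_real (lam k), 1:])"
proof -
  obtain u lam where orth: "orthonormal n n u"
    and eig: "\<And>k i. k < n \<Longrightarrow> i < n \<Longrightarrow> mat_apply n A (u k) i = of_real (lam k) * u k i"
    using hermitian_orthonormal_eigenvectors[OF H] by blast
  have A: "A \<in> carrier_mat n n" using H unfolding hermitian_def by auto
  define U where "U = mat n n (\<lambda>(i, k). u k i)"
  define D where "D = mat n n (\<lambda>(i, j). if i = j then complex_of_real (lam i) else 0)"
  have U: "U \<in> carrier_mat n n" and aU: "adj U \<in> carrier_mat n n" and D: "D \<in> carrier_mat n n"
    unfolding U_def D_def adj_def by auto
  note UDU = orthonormal_eigenbasis_diagonalizes[OF A orth eig, folded U_def D_def]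
  show ?thesis
  proof (rule that[OF orth eig])
    show "A $$ (i, j) = (\<Sum>k<n. of_real (lam k) * u k i * cnj (u k j))" if "i < n" "j < n" for i j
    proof -
      have "(U * D * adj U) $$ (i, j) = (\<Sum>k<n. (\<Sum>l<n. u l i * D $$ (l, k)) * cnj (u k j))"
        using that U D aU unfolding U_def adj_def
        by (auto simp: scalar_prod_def atLeast0LessThan intro!: sum.cong)
      also have "\<dots> = (\<Sum>k<n. of_real (lam k) * u k i * cnj (u k j))"
        unfolding D_def by (intro sum.cong refl) (simp add: if_distrib sum.delta' cong: if_cong)
      finally show ?thesis using UDU by simp
    qed
    have "similar_mat_wit A D U (adj U)"
      unfolding similar_mat_wit_def Let_def
      using A D U aU orthonormal_unitary[OF orth, folded U_def] UDU by auto
    then have "char_poly A = char_poly D" using char_poly_similar unfolding similar_mat_def by blast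
    also have "\<dots> = (\<Prod>a\<leftarrow>diag_mat D. [:- a, 1:])"
      by (rule char_poly_upper_triangular[OF D]) (auto simp: upper_triangular_def D_def)
    also have "diag_mat D = map (\<lambda>k. of_real (lam k)) [0..<n]"
      unfolding diag_mat_def D_def by auto
    finally show "char_poly A = (\<Prod>k\<leftarrow>[0..<n]. [:- of_real (lam k), 1:])" by (simp add: o_def)
  qed
qed

section \<open>Trace norm of convex combinations of rank-one matrices\<close>

lemma order_prod_linear_factors:
  fixes es :: "complex list"
  shows "Polynomial.order z (\<Prod>a\<leftarrow>es. [:- a, 1:]) = count_list es z"
proof (induction es)
  case (Cons e es)
  have "(\<Prod>a\<leftarrow>e # es. [:- a, 1:]) \<noteq> 0" unfolding prod_list_zero_iff by auto
  then have "[:- e, 1:] * (\<Prod>a\<leftarrow>es. [:- a, 1:]) \<noteq> 0" by (metis list.map(2) prod_list.Cons)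
  from order_mult[OF this] show ?case using Cons by (simp add: order_linear')
qed simp

lemma sum_count_list_mult:
  fixes f :: "'a \<Rightarrow> 'b::comm_semiring_1"
  assumes "finite S" "set xs \<subseteq> S"
  shows "(\<Sum>x\<in>S. of_nat (count_list xs x) * f x) = sum_list (map f xs)"
  using assms(2)
proof (induction xs)
  case (Cons y xs)
  have "(\<Sum>x\<in>S. of_nat (count_list (y # xs) x) * f x)
      = (\<Sum>x\<in>S. (if x = y then f x else 0) + of_nat (count_list xs x) * f x)"
    by (intro sum.cong refl) (auto simp: distrib_right)
  also have "\<dots> = f y + (\<Sum>x\<in>S. of_nat (count_list xs x) * f x)"
    using Cons.prems assms(1) by (simp add: sum.distrib sum.delta')
  finally show ?case using Cons by simp
qed simp

lemma trace_norm_eq_sum_sqrt_eigenvalues: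
  assumes "char_poly (X * adj X) = (\<Prod>k\<leftarrow>[0..<n]. [:- of_real (lam k), 1:])"
  shows "trace_norm X = (\<Sum>k<n. sqrt (lam k))"
proof -
  define es where "es = map (\<lambda>k. complex_of_real (lam k)) [0..<n]"
  have cp: "char_poly (X * adj X) = (\<Prod>a\<leftarrow>es. [:- a, 1:])"
    unfolding assms es_def by (simp add: o_def)
  have "{z. poly (\<Prod>a\<leftarrow>es. [:- a, 1:]) z = 0} = set es"
    by (auto simp: poly_prod_list_zero_iff)
  then have "trace_norm X = sum_list (map (\<lambda>z. sqrt (Re z)) es)"
    unfolding trace_norm_def Let_def cp
    by (simp add: order_prod_linear_factors sum_count_list_mult)
  also have "\<dots> = (\<Sum>k<n. sqrt (lam k))"
    unfolding es_def by (simp add: o_def sum_list_sum_nth atLeast0LessThan)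
  finally show ?thesis .
qed

lemma bessel_inequality:
  fixes e :: "nat \<Rightarrow> nat \<Rightarrow> complex"
  assumes orth: "\<And>a b. a < K \<Longrightarrow> b < K \<Longrightarrow> a \<noteq> b \<Longrightarrow> cinner m (e a) (e b) = 0"
    and norm: "\<And>a. a < K \<Longrightarrow> cinner m (e a) (e a) = 0 \<or> cinner m (e a) (e a) = 1"
  shows "(\<Sum>a<K. (cmod (cinner m y (e a)))\<^sup>2) \<le> (\<Sum>l<m. (cmod (y l))\<^sup>2)"
proof -
  define c where "c a = cinner m y (e a)" for a
  define p where "p = (\<lambda>l. \<Sum>a<K. c a * e a l)"
  have c_e: "c a * cinner m (e a) (e a) = c a" if "a < K" for a
  proof (cases "cinner m (e a) (e a) = 0")
    case True
    then have "cinner m y (e a) = cinner m y (\<lambda>l. 0)"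
      using cinner_self_eq_0D by (intro cinner_cong) auto
    then show ?thesis unfolding c_def by (simp add: cinner_def)
  qed (use norm[OF that] in auto)
  have py: "cinner m p y = (\<Sum>a<K. c a * cnj (c a))"
    unfolding p_def c_def by (simp add: cinner_sum_left cinner_scale_left cnj_cinner)
  have pp: "cinner m p p = (\<Sum>a<K. c a * cnj (c a))"
  proof -
    have "cinner m p p = (\<Sum>a<K. c a * (\<Sum>b<K. cnj (c b) * cinner m (e a) (e b)))"
      unfolding p_def by (simp add: cinner_sum_left cinner_scale_left cinner_sum_right cinner_scale_right)
    also have "\<dots> = (\<Sum>a<K. c a * (cnj (c a) * cinner m (e a) (e a)))"
    proof (intro sum.cong refl arg_cong[where f = "\<lambda>t. c _ * t"])
      fix a assume "a \<in> {..<K}"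
      then show "(\<Sum>b<K. cnj (c b) * cinner m (e a) (e b)) = cnj (c a) * cinner m (e a) (e a)"
        using orth by (subst sum.remove[of _ a]) (auto intro!: sum.neutral)
    qed
    also have "\<dots> = (\<Sum>a<K. c a * cnj (c a))"
      using c_e by (intro sum.cong refl) (simp add: mult.left_commute)
    finally show ?thesis .
  qed
  have "cinner m (\<lambda>l. y l - p l) (\<lambda>l. y l - p l) = cinner m y y - cnj (cinner m p y) - cinner m p y + cinner m p p"
    by (simp add: cinner_diff_left cinner_diff_right cnj_cinner)
  also have "\<dots> = cinner m y y - (\<Sum>a<K. c a * cnj (c a))"
    unfolding py pp by (simp add: mult.commute)
  finally have "Re (cinner m (\<lambda>l. y l - p l) (\<lambda>l. y l - p l)) = (\<Sum>l<m. (cmod (y l))\<^sup>2) - (\<Sum>a<K. (cmod (c a))\<^sup>2)"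
    by (simp add: cinner_self complex_norm_square[symmetric])
  with Re_cinner_self_nonneg show ?thesis unfolding c_def by (metis diff_ge_0_iff_ge)
qed

lemma singular_value_vectors:
  fixes X :: "complex mat"
  assumes X: "X \<in> carrier_mat n m"
  defines "w \<equiv> \<lambda>u l. \<Sum>i<n. cnj (X $$ (i, l)) * u i"
  obtains u lam where "orthonormal n n u" "\<And>k. k < n \<Longrightarrow> 0 \<le> lam k"
    "\<And>a b. a < n \<Longrightarrow> b < n \<Longrightarrow> cinner m (w (u a)) (w (u b)) = (if a = b then of_real (lam a) else 0)"
    "trace_norm X = (\<Sum>k<n. sqrt (lam k))"
proof -
  define M where "M = X * adj X"
  have M: "M \<in> carrier_mat n n" unfolding M_def using X by (auto simp: adj_def)
  have M_entry: "M $$ (i, j) = (\<Sum>l<m. X $$ (i, l) * cnj (X $$ (j, l)))" if "i < n" "j < n" for i j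
    unfolding M_def using X that by (auto simp: adj_def scalar_prod_def atLeast0LessThan intro!: sum.cong)
  have "hermitian n M" unfolding hermitian_def using M M_entry by (auto simp: mult.commute)
  then obtain u lam where orth: "orthonormal n n u"
    and eig: "\<And>k i. k < n \<Longrightarrow> i < n \<Longrightarrow> mat_apply n M (u k) i = of_real (lam k) * u k i"
    and cp: "char_poly M = (\<Prod>k\<leftarrow>[0..<n]. [:- of_real (lam k), 1:])"
    by (rule hermitian_spectral_decomposition) blast
  have M_apply: "mat_apply n M y i = (\<Sum>l<m. X $$ (i, l) * w y l)" if "i < n" for y i
  proof -
    have "mat_apply n M y i = (\<Sum>j<n. \<Sum>l<m. X $$ (i, l) * (cnj (X $$ (j, l)) * y j))"
      unfolding mat_apply_def using M_entry that by (simp add: sum_distrib_right mult.assoc)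
    then show ?thesis unfolding w_def by (subst (asm) sum.swap) (simp add: sum_distrib_left)
  qed
  have w_orth: "cinner m (w (u a)) (w (u b)) = (if a = b then of_real (lam a) else 0)"
    if "a < n" "b < n" for a b
  proof -
    have "cinner m (w (u a)) (w (u b)) = (\<Sum>i<n. (\<Sum>l<m. X $$ (i, l) * w (u a) l) * cnj (u b i))"
      unfolding cinner_def w_def
      by (simp add: sum_distrib_left sum_distrib_right mult_ac) (subst sum.swap, simp add: sum.swap[of _ "{..<m}"])
    also have "\<dots> = cinner n (mat_apply n M (u a)) (u b)"
      unfolding cinner_def using M_apply by (intro sum.cong) auto
    also have "\<dots> = cinner n (\<lambda>i. of_real (lam a) * u a i) (u b)"
      using eig that by (intro cinner_cong) auto
    finally show ?thesis using orth that unfolding orthonormal_def by (simp add: cinner_scale_left)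
  qed
  show ?thesis
  proof (rule that[OF orth _ w_orth trace_norm_eq_sum_sqrt_eigenvalues[OF cp[unfolded M_def]]])
    show "0 \<le> lam k" if "k < n" for k
      using Re_cinner_self_nonneg[of m "w (u k)"] w_orth[OF that that] by simp
  qed
qed

lemma normalize_orthogonal_family:
  assumes orth: "\<And>a b. a < n \<Longrightarrow> b < n \<Longrightarrow> cinner m (w a) (w b) = (if a = b then of_real (lam a) else 0)"
    and lam: "\<And>k. k < n \<Longrightarrow> 0 \<le> lam k"
  obtains e where "\<And>a b. a < n \<Longrightarrow> b < n \<Longrightarrow> a \<noteq> b \<Longrightarrow> cinner m (e a) (e b) = 0"
    "\<And>a. a < n \<Longrightarrow> cinner m (e a) (e a) = 0 \<or> cinner m (e a) (e a) = 1"
    "\<And>k. k < n \<Longrightarrow> cinner m (w k) (e k) = of_real (sqrt (lam k))"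
proof
  \<comment> \<open>For \<open>lam k = 0\<close> the division by zero makes \<open>e k\<close> the zero vector.\<close>
  define e where "e k = (\<lambda>l. w k l / of_real (sqrt (lam k)))" for k
  have e_e: "cinner m (e a) (e b) = cinner m (w a) (w b) / of_real (sqrt (lam a) * sqrt (lam b))" for a b
    unfolding e_def cinner_def by (simp add: sum_divide_distrib)
  show "cinner m (e a) (e b) = 0" if "a < n" "b < n" "a \<noteq> b" for a b
    using e_e orth that by simp
  show "cinner m (e a) (e a) = 0 \<or> cinner m (e a) (e a) = 1" if "a < n" for a
    using e_e[of a a] orth[OF that that] lam[OF that] by (cases "lam a = 0") simp_all
  show "cinner m (w k) (e k) = of_real (sqrt (lam k))" if "k < n" for k
  proof -
    have "cinner m (w k) (e k) = of_real (lam k / sqrt (lam k))"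
      using orth[OF that that] unfolding e_def cinner_def by (simp add: sum_divide_distrib[symmetric])
    then show ?thesis using lam[OF that] by (simp add: real_div_sqrt)
  qed
qed

lemma cinner_adjoint_rank_one_sum:
  assumes X_eq: "\<And>i j. i < n \<Longrightarrow> j < m \<Longrightarrow> X $$ (i, j) = (\<Sum>s<K. of_real (c s) * x s i * z s j)"
  shows "cinner m (\<lambda>l. \<Sum>i<n. cnj (X $$ (i, l)) * v i) e
       = (\<Sum>s<K. of_real (c s) * cinner n v (x s) * cnj (cinner m e (\<lambda>l. cnj (z s l))))"
proof -
  have adj_v: "(\<Sum>i<n. cnj (X $$ (i, l)) * v i) = (\<Sum>s<K. of_real (c s) * cnj (z s l) * cinner n v (x s))"
    if "l < m" for l
  proof -
    have "(\<Sum>i<n. cnj (X $$ (i, l)) * v i) = (\<Sum>i<n. \<Sum>s<K. of_real (c s) * cnj (z s l) * (v i * cnj (x s i)))"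
      using X_eq that by (auto intro!: sum.cong simp: sum_distrib_left mult_ac)
    then show ?thesis unfolding cinner_def by (subst (asm) sum.swap) (simp add: sum_distrib_left)
  qed
  have "cinner m (\<lambda>l. \<Sum>i<n. cnj (X $$ (i, l)) * v i) e
      = (\<Sum>l<m. \<Sum>s<K. of_real (c s) * cinner n v (x s) * (cnj (z s l) * cnj (e l)))"
    unfolding cinner_def[of m] using adj_v by (intro sum.cong) (auto simp: sum_distrib_left mult_ac)
  also have "\<dots> = (\<Sum>s<K. of_real (c s) * cinner n v (x s) * cnj (cinner m e (\<lambda>l. cnj (z s l))))"
    unfolding cinner_def[of m] by (subst sum.swap) (simp add: sum_distrib_left mult_ac)
  finally show ?thesis .
qed

theorem trace_norm_sum_rank_one_le:
  fixes X :: "complex mat" and c :: "nat \<Rightarrow> real" and x z :: "nat \<Rightarrow> nat \<Rightarrow> complex"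
  assumes X: "X \<in> carrier_mat n m"
    and X_eq: "\<And>i j. i < n \<Longrightarrow> j < m \<Longrightarrow> X $$ (i, j) = (\<Sum>s<K. of_real (c s) * x s i * z s j)"
    and c: "\<And>s. s < K \<Longrightarrow> 0 \<le> c s"
  shows "trace_norm X \<le> (\<Sum>s<K. c s * L2_set (\<lambda>i. cmod (x s i)) {..<n} * L2_set (\<lambda>j. cmod (z s j)) {..<m})"
proof -
  define w where "w = (\<lambda>u l. \<Sum>i<n. cnj (X $$ (i, l)) * u i)"
  obtain u lam where orth: "orthonormal n n u" and lam: "\<And>k. k < n \<Longrightarrow> 0 \<le> lam k"
    and w_orth: "\<And>a b. a < n \<Longrightarrow> b < n \<Longrightarrow> cinner m (w (u a)) (w (u b)) = (if a = b then of_real (lam a) else 0)"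
    and tn: "trace_norm X = (\<Sum>k<n. sqrt (lam k))"
    using singular_value_vectors[OF X] unfolding w_def by blast
  obtain e where e_orth: "\<And>a b. a < n \<Longrightarrow> b < n \<Longrightarrow> a \<noteq> b \<Longrightarrow> cinner m (e a) (e b) = 0"
    and e_norm: "\<And>a. a < n \<Longrightarrow> cinner m (e a) (e a) = 0 \<or> cinner m (e a) (e a) = 1"
    and w_e: "\<And>k. k < n \<Longrightarrow> cinner m (w (u k)) (e k) = of_real (sqrt (lam k))"
    using normalize_orthogonal_family[of n m "\<lambda>k. w (u k)" lam, OF w_orth lam] by blast
  define A where "A s k = cmod (cinner n (x s) (u k))" for s k
  define B where "B s k = cmod (cinner m (\<lambda>l. cnj (z s l)) (e k))" for s k
  have sqrt_lam: "sqrt (lam k) \<le> (\<Sum>s<K. c s * (A s k * B s k))" if "k < n" for k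
  proof -
    have "cinner m (w (u k)) (e k)
        = (\<Sum>s<K. of_real (c s) * cinner n (u k) (x s) * cnj (cinner m (e k) (\<lambda>l. cnj (z s l))))"
      unfolding w_def by (rule cinner_adjoint_rank_one_sum[OF X_eq])
    then have "sqrt (lam k) = cmod (\<Sum>s<K. of_real (c s) * cinner n (u k) (x s) * cnj (cinner m (e k) (\<lambda>l. cnj (z s l))))"
      using w_e[OF that] lam[OF that] by (metis norm_of_real real_sqrt_ge_zero abs_of_nonneg)
    also have "\<dots> \<le> (\<Sum>s<K. c s * (A s k * B s k))"
      unfolding A_def B_def using c
      by (intro order_trans[OF norm_sum] sum_mono)
         (simp add: norm_mult norm_cinner_commute[of n "u k"] norm_cinner_commute[of m "e k"])
    finally show ?thesis .
  qed
  have A: "L2_set (A s) {..<n} \<le> L2_set (\<lambda>i. cmod (x s i)) {..<n}" for s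
    unfolding L2_set_def A_def using orth unfolding orthonormal_def
    by (intro real_sqrt_le_mono bessel_inequality) auto
  have B: "L2_set (B s) {..<n} \<le> L2_set (\<lambda>j. cmod (z s j)) {..<m}" for s
    unfolding L2_set_def B_def using e_orth e_norm
    by (intro real_sqrt_le_mono order_trans[OF bessel_inequality]) auto
  have "trace_norm X \<le> (\<Sum>k<n. \<Sum>s<K. c s * (A s k * B s k))"
    unfolding tn by (intro sum_mono sqrt_lam) simp
  also have "\<dots> = (\<Sum>s<K. c s * (\<Sum>k<n. \<bar>A s k\<bar> * \<bar>B s k\<bar>))"
    unfolding A_def B_def by (subst sum.swap) (simp add: sum_distrib_left)
  also have "\<dots> \<le> (\<Sum>s<K. c s * (L2_set (A s) {..<n} * L2_set (B s) {..<n}))"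
    using c by (intro sum_mono mult_left_mono L2_set_mult_ineq) auto
  also have "\<dots> \<le> (\<Sum>s<K. c s * (L2_set (\<lambda>i. cmod (x s i)) {..<n} * L2_set (\<lambda>j. cmod (z s j)) {..<m}))"
    using c A B by (intro sum_mono mult_left_mono mult_mono) auto
  finally show ?thesis by (simp add: mult.assoc)
qed

lemma trace_norm_convex_rank_one_le:
  fixes X :: "complex mat" and p :: "nat \<Rightarrow> real" and x z :: "nat \<Rightarrow> nat \<Rightarrow> complex"
  assumes X: "X \<in> carrier_mat n m"
    and X_eq: "\<And>i j. i < n \<Longrightarrow> j < m \<Longrightarrow> X $$ (i, j) = (\<Sum>s<K. of_real (p s) * x s i * z s j)"
    and p: "\<And>s. s < K \<Longrightarrow> 0 \<le> p s" "(\<Sum>s<K. p s) = 1"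
    and x: "\<And>s. s < K \<Longrightarrow> L2_set (\<lambda>i. cmod (x s i)) {..<n} \<le> a"
    and z: "\<And>s. s < K \<Longrightarrow> L2_set (\<lambda>j. cmod (z s j)) {..<m} \<le> b"
  shows "trace_norm X \<le> a * b"
proof -
  have "trace_norm X \<le> (\<Sum>s<K. p s * L2_set (\<lambda>i. cmod (x s i)) {..<n} * L2_set (\<lambda>j. cmod (z s j)) {..<m})"
    by (rule trace_norm_sum_rank_one_le[OF X X_eq p(1)])
  also have "\<dots> \<le> (\<Sum>s<K. p s * (a * b))"
    using p(1) x z by (intro sum_mono) (simp add: mult.assoc mult_left_mono mult_mono')
  also have "\<dots> = a * b" using p(2) by (simp add: sum_distrib_right[symmetric])
  finally show ?thesis .
qed

section \<open>Pauli coefficients\<close>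

lemma bij_betw_mult_add: "bij_betw (\<lambda>(x, y). x * b + y) ({..<a} \<times> {..<b}) {..<a * b}" for a b :: nat
proof (rule bij_betw_byWitness[where f' = "\<lambda>I. (I div b, I mod b)"])
  show "(\<lambda>(x, y). x * b + y) ` ({..<a} \<times> {..<b}) \<subseteq> {..<a * b}"
  proof clarsimp
    fix x y assume "x < a" "y < b"
    then have "x * b + y < (x + 1) * b" by simp
    also have "\<dots> \<le> a * b" using \<open>x < a\<close> by (intro mult_right_mono) auto
    finally show "x * b + y < a * b" .
  qed
  show "(\<lambda>I. (I div b, I mod b)) ` {..<a * b} \<subseteq> {..<a} \<times> {..<b}"
    by (auto simp: less_mult_imp_div_less) (metis mod_less_divisor mult_0_right not_less0 neq0_conv)
qed auto

lemma bij_betw_mult_add_swap: "bij_betw (\<lambda>(y, x). x * b + y) ({..<b} \<times> {..<a}) {..<a * b}" for a b :: nat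
proof -
  have "bij_betw prod.swap ({..<b} \<times> {..<a}) ({..<a} \<times> {..<b})"
    by (auto simp: bij_betw_def inj_on_def)
  from bij_betw_trans[OF this bij_betw_mult_add] show ?thesis by (simp add: comp_def split_def)
qed

lemma sum_bij_betw_pairs:
  assumes "bij_betw (\<lambda>(x, y). \<phi> x y) ({..<A} \<times> {..<B}) {..<n}"
  shows "(\<Sum>I<n. F I) = (\<Sum>x<A. \<Sum>y<B. F (\<phi> x y))"
proof -
  have "(\<Sum>x<A. \<Sum>y<B. F (\<phi> x y)) = (\<Sum>p\<in>{..<A} \<times> {..<B}. F ((\<lambda>(x, y). \<phi> x y) p))"
    by (simp add: sum.cartesian_product split_def)
  also have "\<dots> = (\<Sum>I<n. F I)" by (rule sum.reindex_bij_betw[OF assms])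
  finally show ?thesis by simp
qed

lemma sum_lessThan_mult_split: "(\<Sum>I<a * b. F I) = (\<Sum>x<a. \<Sum>y<b. F (x * b + y))" for a b :: nat
  by (rule sum_bij_betw_pairs[OF bij_betw_mult_add])

lemma sum_lessThan_mod_shift:
  fixes g :: "nat \<Rightarrow> 'a::ab_group_add"
  assumes "0 < d"
  shows "(\<Sum>j<d. g ((m + j) mod d)) = (\<Sum>j<d. g j)"
proof (induction m)
  case (Suc m)
  define f where "f j = g ((m + j) mod d)" for j
  have "f 0 + (\<Sum>j<d. f (Suc j)) = (\<Sum>j<d. f j) + f d"
    using sum.lessThan_Suc_shift[of f d] sum.lessThan_Suc[of f d] by simp
  then have "(\<Sum>j<d. f (Suc j)) = (\<Sum>j<d. f j)" unfolding f_def by (simp add: algebra_simps)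
  then show ?case using Suc unfolding f_def by simp
qed simp

lemma sum_lessThan_minus_1_Suc: "0 < N \<Longrightarrow> (\<Sum>r<N - 1. F (Suc r)) = (\<Sum>u<N. F u) - (F 0 :: real)"
  by (cases N) (simp_all only: sum.lessThan_Suc_shift, simp_all)

lemma prim_root_cnj_mult:
  assumes "prim_root d w" "0 < d"
  shows "cnj w * w = 1"
proof -
  have "cmod w ^ d = 1" using assms unfolding prim_root_def by (metis norm_one norm_power)
  then have "cmod w ^ d = 1 ^ d" by simp
  then have "cmod w = 1" using power_eq_iff_eq_base[OF assms(2), of "cmod w" 1] by simp
  then have "cnj w * w = of_real (1 ^ 2)" by (metis complex_norm_square mult.commute)
  then show ?thesis by simp
qed

lemma prim_root_orthogonality:
  assumes w: "prim_root d w" and d: "0 < d" and m: "m < d" and m': "m' < d"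
  shows "(\<Sum>i<d. cnj w ^ (i * m) * w ^ (i * m')) = (if m = m' then of_nat d else 0)"
proof -
  have u: "cnj w * w = 1" by (rule prim_root_cnj_mult[OF w d])
  have wd: "w ^ d = 1" using w unfolding prim_root_def by simp
  define q where "q = cnj w ^ m * w ^ m'"
  have terms: "cnj w ^ (i * m) * w ^ (i * m') = q ^ i" for i
    unfolding q_def by (simp add: power_mult_distrib power_mult[symmetric] mult.commute)
  show ?thesis
  proof (cases "m = m'")
    case True
    then have "q = 1" unfolding q_def using u by (simp add: power_mult_distrib[symmetric])
    then show ?thesis using True terms by simp
  next
    case False
    have "q ^ d = cnj (w ^ d) ^ m * (w ^ d) ^ m'"
      unfolding q_def by (simp add: power_mult_distrib power_mult[symmetric] mult.commute)
    then have qd: "q ^ d = 1" using wd by simp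
    have "q \<noteq> 1"
    proof (cases "m < m'")
      case True
      have "q = (cnj w * w) ^ m * w ^ (m' - m)" unfolding q_def using True
        by (simp add: power_mult_distrib power_add[symmetric])
      then have "q = w ^ (m' - m)" using u by simp
      moreover have "w ^ (m' - m) \<noteq> 1" using w True m' unfolding prim_root_def by auto
      ultimately show ?thesis by simp
    next
      case False
      then have lt: "m' < m" using \<open>m \<noteq> m'\<close> by simp
      have "q = cnj w ^ (m - m') * (cnj w * w) ^ m'" unfolding q_def using lt
        by (simp add: power_mult_distrib power_add[symmetric])
      then have "q = cnj (w ^ (m - m'))" using u by simp
      moreover have "w ^ (m - m') \<noteq> 1" using w lt m unfolding prim_root_def by auto
      ultimately show ?thesis by (metis complex_cnj_cnj complex_cnj_one)
    qed
    then have "(\<Sum>i<d. q ^ i) = 0" using geometric_sum[of q d] qd by simp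
    then show ?thesis using False terms by simp
  qed
qed

lemma dft_parseval:
  assumes w: "prim_root d w" and d: "0 < d"
  shows "(\<Sum>i<d. (cmod (\<Sum>m<d. c m * cnj w ^ (i * m)))\<^sup>2) = real d * (\<Sum>m<d. (cmod (c m))\<^sup>2)"
proof -
  have "complex_of_real (\<Sum>i<d. (cmod (\<Sum>m<d. c m * cnj w ^ (i * m)))\<^sup>2)
      = (\<Sum>i<d. (\<Sum>m<d. c m * cnj w ^ (i * m)) * cnj (\<Sum>m'<d. c m' * cnj w ^ (i * m')))"
    unfolding of_real_sum by (intro sum.cong refl) (rule complex_norm_square)
  also have "\<dots> = (\<Sum>i<d. \<Sum>m<d. \<Sum>m'<d. c m * cnj (c m') * (cnj w ^ (i * m) * w ^ (i * m')))"
    by (simp add: sum_distrib_left sum_distrib_right mult_ac)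
       (rule sum.cong[OF refl], subst sum.swap, simp add: mult_ac)
  also have "\<dots> = (\<Sum>m<d. \<Sum>m'<d. c m * cnj (c m') * (\<Sum>i<d. cnj w ^ (i * m) * w ^ (i * m')))"
    by (simp add: sum_distrib_left) (subst sum.swap, rule sum.cong[OF refl], rule sum.swap)
  also have "\<dots> = (\<Sum>m<d. \<Sum>m'<d. if m' = m then c m * cnj (c m) * of_nat d else 0)"
    by (intro sum.cong refl) (auto simp: prim_root_orthogonality[OF w d])
  also have "\<dots> = (\<Sum>m<d. c m * cnj (c m) * of_nat d)"
    by (intro sum.cong refl) simp
  also have "\<dots> = (\<Sum>m<d. of_nat d * complex_of_real ((cmod (c m))\<^sup>2))"
    by (intro sum.cong refl) (simp only: complex_norm_square mult.commute)
  also have "\<dots> = complex_of_real (real d * (\<Sum>m<d. (cmod (c m))\<^sup>2))"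
    by (simp only: of_real_mult of_real_sum of_real_of_nat_eq sum_distrib_left)
  finally show ?thesis by (simp only: of_real_eq_iff)
qed

definition pauli_coeff :: "nat \<Rightarrow> complex \<Rightarrow> (nat \<Rightarrow> nat \<Rightarrow> complex) \<Rightarrow> nat \<Rightarrow> complex" where
  "pauli_coeff d w R u = (\<Sum>m<d. \<Sum>n<d. R m n * cnj (pauli d w u $$ (m, n)))"

lemma pauli_coeff_eq:
  assumes "0 < d"
  shows "pauli_coeff d w R u = (\<Sum>m<d. R m ((m + u mod d) mod d) * cnj w ^ (u div d * m))"
  unfolding pauli_coeff_def
proof (rule sum.cong[OF refl])
  fix m assume m: "m \<in> {..<d}"
  have "(\<Sum>n<d. R m n * cnj (pauli d w u $$ (m, n)))
     = (\<Sum>n<d. if n = (m + u mod d) mod d then R m n * cnj w ^ (u div d * m) else 0)"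
    using m by (intro sum.cong) (auto simp: pauli_def)
  also have "\<dots> = R m ((m + u mod d) mod d) * cnj w ^ (u div d * m)"
    using assms by (subst sum.delta) auto
  finally show "(\<Sum>n<d. R m n * cnj (pauli d w u $$ (m, n))) = R m ((m + u mod d) mod d) * cnj w ^ (u div d * m)" .
qed

lemma pauli_coeff_0:
  assumes "0 < d"
  shows "pauli_coeff d w R 0 = (\<Sum>m<d. R m m)"
  unfolding pauli_coeff_eq[OF assms] by (intro sum.cong refl) simp

lemma pauli_coeff_sum: "pauli_coeff d w (\<lambda>m n. \<Sum>k\<in>S. F k m n) u = (\<Sum>k\<in>S. pauli_coeff d w (F k) u)"
  unfolding pauli_coeff_def
  by (simp add: sum_distrib_right) (subst sum.swap, rule sum.cong[OF refl], rule sum.swap)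

definition purity :: "nat \<Rightarrow> (nat \<Rightarrow> nat \<Rightarrow> complex) \<Rightarrow> real" where
  "purity n R = (\<Sum>i<n. \<Sum>j<n. (cmod (R i j))\<^sup>2)"

theorem pauli_coeff_parseval:
  assumes w: "prim_root d w" and d: "0 < d"
  shows "(\<Sum>u<d * d. (cmod (pauli_coeff d w R u))\<^sup>2) = real d * purity d R"
proof -
  have "(\<Sum>u<d * d. (cmod (pauli_coeff d w R u))\<^sup>2)
      = (\<Sum>j<d. \<Sum>i<d. (cmod (\<Sum>m<d. R m ((m + j) mod d) * cnj w ^ (i * m)))\<^sup>2)"
    unfolding sum_lessThan_mult_split
  proof (subst sum.swap, intro sum.cong refl)
    fix j i assume "j \<in> {..<d}" "i \<in> {..<d}"
    then have "(i * d + j) mod d = j" "(i * d + j) div d = i" by auto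
    then show "(cmod (pauli_coeff d w R (i * d + j)))\<^sup>2 = (cmod (\<Sum>m<d. R m ((m + j) mod d) * cnj w ^ (i * m)))\<^sup>2"
      by (simp add: pauli_coeff_eq[OF d])
  qed
  also have "\<dots> = (\<Sum>j<d. real d * (\<Sum>m<d. (cmod (R m ((m + j) mod d)))\<^sup>2))"
    by (intro sum.cong refl dft_parseval[OF w d])
  also have "\<dots> = real d * (\<Sum>m<d. \<Sum>j<d. (cmod (R m ((m + j) mod d)))\<^sup>2)"
    by (simp add: sum_distrib_left) (rule sum.swap)
  also have "\<dots> = real d * purity d R"
    unfolding purity_def
    by (intro arg_cong[where f = "\<lambda>x. real d * x"] sum.cong refl sum_lessThan_mod_shift[OF d])
  finally show ?thesis .
qed

definition pauli_coeff2 ::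
  "nat \<Rightarrow> nat \<Rightarrow> complex \<Rightarrow> complex \<Rightarrow> (nat \<Rightarrow> nat \<Rightarrow> complex) \<Rightarrow> nat \<Rightarrow> nat \<Rightarrow> complex" where
  "pauli_coeff2 da db wa wb R ua ub = (\<Sum>I<da * db. \<Sum>J<da * db. R I J *
     cnj (pauli da wa ua $$ (I div db, J div db) * pauli db wb ub $$ (I mod db, J mod db)))"

lemma pauli_coeff2_eq:
  assumes "0 < db"
  shows "pauli_coeff2 da db wa wb R ua ub = (\<Sum>x<da. \<Sum>y<db. \<Sum>x'<da. \<Sum>y'<db.
     R (x * db + y) (x' * db + y') * cnj (pauli da wa ua $$ (x, x') * pauli db wb ub $$ (y, y')))"
  unfolding pauli_coeff2_def sum_lessThan_mult_split using assms by (intro sum.cong refl) auto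

lemma pauli_coeff2_nested:
  assumes "0 < db"
  shows "pauli_coeff2 da db wa wb R ua ub
    = pauli_coeff da wa (\<lambda>x x'. pauli_coeff db wb (\<lambda>y y'. R (x * db + y) (x' * db + y')) ub) ua"
  unfolding pauli_coeff2_eq[OF assms] pauli_coeff_def
  by (simp add: sum_distrib_right sum_distrib_left mult_ac) (rule sum.cong[OF refl], rule sum.swap)

definition reduced_fst :: "nat \<Rightarrow> (nat \<Rightarrow> nat \<Rightarrow> complex) \<Rightarrow> nat \<Rightarrow> nat \<Rightarrow> complex" where
  "reduced_fst db R x x' = (\<Sum>y<db. R (x * db + y) (x' * db + y))"

definition reduced_snd :: "nat \<Rightarrow> nat \<Rightarrow> (nat \<Rightarrow> nat \<Rightarrow> complex) \<Rightarrow> nat \<Rightarrow> nat \<Rightarrow> complex" where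
  "reduced_snd da db R y y' = (\<Sum>x<da. R (x * db + y) (x * db + y'))"

lemma pauli_coeff2_0_right:
  assumes "0 < db"
  shows "pauli_coeff2 da db wa wb R ua 0 = pauli_coeff da wa (reduced_fst db R) ua"
  unfolding pauli_coeff2_nested[OF assms] pauli_coeff_0[OF assms] reduced_fst_def ..

lemma pauli_coeff2_0_left:
  assumes "0 < da" "0 < db"
  shows "pauli_coeff2 da db wa wb R 0 ub = pauli_coeff db wb (reduced_snd da db R) ub"
  unfolding pauli_coeff2_nested[OF assms(2)] pauli_coeff_0[OF assms(1)] pauli_coeff_sum reduced_snd_def ..

lemma pauli_coeff2_0_0:
  assumes "0 < da" "0 < db"
  shows "pauli_coeff2 da db wa wb R 0 0 = (\<Sum>I<da * db. R I I)"
  unfolding pauli_coeff2_0_right[OF assms(2)] pauli_coeff_0[OF assms(1)] reduced_fst_def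
    sum_lessThan_mult_split ..

theorem pauli_coeff2_parseval:
  assumes wa: "prim_root da wa" and wb: "prim_root db wb" and da: "0 < da" and db: "0 < db"
  shows "(\<Sum>ua<da * da. \<Sum>ub<db * db. (cmod (pauli_coeff2 da db wa wb R ua ub))\<^sup>2)
       = real da * real db * purity (da * db) R"
proof -
  define Rx where "Rx x x' = (\<lambda>y y'. R (x * db + y) (x' * db + y'))" for x x'
  have "(\<Sum>ua<da * da. \<Sum>ub<db * db. (cmod (pauli_coeff2 da db wa wb R ua ub))\<^sup>2)
     = (\<Sum>ub<db * db. \<Sum>ua<da * da. (cmod (pauli_coeff da wa (\<lambda>x x'. pauli_coeff db wb (Rx x x') ub) ua))\<^sup>2)"
    unfolding pauli_coeff2_nested[OF db] Rx_def by (rule sum.swap)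
  also have "\<dots> = (\<Sum>ub<db * db. real da * (\<Sum>x<da. \<Sum>x'<da. (cmod (pauli_coeff db wb (Rx x x') ub))\<^sup>2))"
    by (intro sum.cong refl) (simp add: pauli_coeff_parseval[OF wa da] purity_def)
  also have "\<dots> = real da * (\<Sum>x<da. \<Sum>x'<da. \<Sum>ub<db * db. (cmod (pauli_coeff db wb (Rx x x') ub))\<^sup>2)"
    by (simp add: sum_distrib_left) (subst sum.swap, rule sum.cong[OF refl], rule sum.swap)
  also have "\<dots> = real da * (\<Sum>x<da. \<Sum>x'<da. real db * (\<Sum>y<db. \<Sum>y'<db. (cmod (Rx x x' y y'))\<^sup>2))"
    by (intro arg_cong[where f = "\<lambda>t. real da * t"] sum.cong refl) (simp add: pauli_coeff_parseval[OF wb db] purity_def)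
  also have "\<dots> = real da * real db * (\<Sum>x<da. \<Sum>y<db. \<Sum>x'<da. \<Sum>y'<db. (cmod (Rx x x' y y'))\<^sup>2)"
    by (simp add: sum_distrib_left mult.assoc) (rule sum.cong[OF refl], rule sum.swap)
  also have "\<dots> = real da * real db * purity (da * db) R"
    unfolding purity_def sum_lessThan_mult_split Rx_def ..
  finally show ?thesis .
qed

section \<open>Purity of bipartite operators\<close>

lemma cmod_sum_mult_cnj_le:
  fixes a b :: "'i \<Rightarrow> complex"
  shows "(cmod (\<Sum>i\<in>S. a i * cnj (b i)))\<^sup>2 \<le> (\<Sum>i\<in>S. (cmod (a i))\<^sup>2) * (\<Sum>i\<in>S. (cmod (b i))\<^sup>2)"
proof -
  have "cmod (\<Sum>i\<in>S. a i * cnj (b i)) \<le> (\<Sum>i\<in>S. \<bar>cmod (a i)\<bar> * \<bar>cmod (b i)\<bar>)"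
    by (rule order_trans[OF norm_sum]) (simp add: norm_mult)
  also have "\<dots> \<le> L2_set (\<lambda>i. cmod (a i)) S * L2_set (\<lambda>i. cmod (b i)) S"
    by (rule L2_set_mult_ineq)
  finally have "(cmod (\<Sum>i\<in>S. a i * cnj (b i)))\<^sup>2 \<le> (L2_set (\<lambda>i. cmod (a i)) S * L2_set (\<lambda>i. cmod (b i)) S)\<^sup>2"
    by (rule power_mono) simp
  then show ?thesis by (simp add: power_mult_distrib L2_set_def sum_nonneg)
qed

lemma gram_norm_squared_swap:
  fixes a :: "'k \<Rightarrow> 'i \<Rightarrow> complex"
  shows "(\<Sum>i\<in>S. \<Sum>j\<in>S. (cmod (\<Sum>k\<in>Ks. a k i * cnj (a k j)))\<^sup>2)
       = (\<Sum>k\<in>Ks. \<Sum>l\<in>Ks. (cmod (\<Sum>i\<in>S. a k i * cnj (a l i)))\<^sup>2)"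
proof -
  have "complex_of_real (\<Sum>i\<in>S. \<Sum>j\<in>S. (cmod (\<Sum>k\<in>Ks. a k i * cnj (a k j)))\<^sup>2)
     = (\<Sum>i\<in>S. \<Sum>j\<in>S. \<Sum>k\<in>Ks. \<Sum>l\<in>Ks. a k i * cnj (a k j) * (cnj (a l i) * a l j))"
    unfolding of_real_sum complex_norm_square
    by (simp add: sum_distrib_left sum_distrib_right)
       (rule sum.cong[OF refl], rule sum.cong[OF refl], rule sum.swap)
  also have "\<dots> = (\<Sum>i\<in>S. \<Sum>k\<in>Ks. \<Sum>l\<in>Ks. \<Sum>j\<in>S. a k i * cnj (a k j) * (cnj (a l i) * a l j))"
    by (rule sum.cong[OF refl], subst sum.swap, rule sum.cong[OF refl], rule sum.swap)
  also have "\<dots> = (\<Sum>k\<in>Ks. \<Sum>l\<in>Ks. \<Sum>i\<in>S. \<Sum>j\<in>S. a k i * cnj (a k j) * (cnj (a l i) * a l j))"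
    by (subst sum.swap, rule sum.cong[OF refl], rule sum.swap)
  also have "\<dots> = (\<Sum>k\<in>Ks. \<Sum>l\<in>Ks. (\<Sum>i\<in>S. a k i * cnj (a l i)) * cnj (\<Sum>j\<in>S. a k j * cnj (a l j)))"
    by (simp add: sum_distrib_left sum_distrib_right mult_ac)
       (rule sum.cong[OF refl], rule sum.cong[OF refl], rule sum.swap)
  also have "\<dots> = complex_of_real (\<Sum>k\<in>Ks. \<Sum>l\<in>Ks. (cmod (\<Sum>i\<in>S. a k i * cnj (a l i)))\<^sup>2)"
    unfolding of_real_sum by (intro sum.cong refl) (rule complex_norm_square[symmetric])
  finally show ?thesis by (simp only: of_real_eq_iff)
qed

lemma gram_norm_squared_le:
  fixes a :: "'k \<Rightarrow> 'i \<Rightarrow> complex"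
  shows "(\<Sum>i\<in>S. \<Sum>j\<in>S. (cmod (\<Sum>k\<in>Ks. a k i * cnj (a k j)))\<^sup>2) \<le> (\<Sum>k\<in>Ks. \<Sum>i\<in>S. (cmod (a k i))\<^sup>2)\<^sup>2"
proof -
  have "(\<Sum>i\<in>S. \<Sum>j\<in>S. (cmod (\<Sum>k\<in>Ks. a k i * cnj (a k j)))\<^sup>2)
       = (\<Sum>k\<in>Ks. \<Sum>l\<in>Ks. (cmod (\<Sum>i\<in>S. a k i * cnj (a l i)))\<^sup>2)" by (rule gram_norm_squared_swap)
  also have "\<dots> \<le> (\<Sum>k\<in>Ks. \<Sum>l\<in>Ks. (\<Sum>i\<in>S. (cmod (a k i))\<^sup>2) * (\<Sum>i\<in>S. (cmod (a l i))\<^sup>2))"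
    by (intro sum_mono cmod_sum_mult_cnj_le)
  also have "\<dots> = (\<Sum>k\<in>Ks. \<Sum>i\<in>S. (cmod (a k i))\<^sup>2)\<^sup>2"
    by (simp only: power2_eq_square[of "sum _ Ks"] sum_product)
  finally show ?thesis .
qed

text \<open>Via \<open>\<phi>\<close>, \<open>R\<close> is an operator on a bipartite space \<open>A \<times> B\<close>, and summing over \<open>y\<close> is the
  partial trace over the second factor.\<close>

locale bipartite_gram =
  fixes n A B K :: nat and \<phi> :: "nat \<Rightarrow> nat \<Rightarrow> nat" and h :: "nat \<Rightarrow> nat \<Rightarrow> complex"
    and R :: "nat \<Rightarrow> nat \<Rightarrow> complex"
  assumes \<phi>: "bij_betw (\<lambda>(x, y). \<phi> x y) ({..<A} \<times> {..<B}) {..<n}"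
    and R: "\<And>I J. I < n \<Longrightarrow> J < n \<Longrightarrow> R I J = (\<Sum>k<K. h k I * cnj (h k J))"
begin

definition gram_vec :: "nat \<times> nat \<Rightarrow> nat \<Rightarrow> complex" where
  "gram_vec p x = h (fst p) (\<phi> x (snd p))"

lemma reduced_eq_gram:
  assumes "x < A" "x' < A"
  shows "(\<Sum>y<B. R (\<phi> x y) (\<phi> x' y)) = (\<Sum>p\<in>{..<K} \<times> {..<B}. gram_vec p x * cnj (gram_vec p x'))"
proof -
  have "\<phi> x y < n" "\<phi> x' y < n" if "y < B" for y using bij_betwE[OF \<phi>] assms that by auto
  then have "(\<Sum>y<B. R (\<phi> x y) (\<phi> x' y)) = (\<Sum>y<B. \<Sum>k<K. h k (\<phi> x y) * cnj (h k (\<phi> x' y)))"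
    using R by simp
  also have "\<dots> = (\<Sum>p\<in>{..<K} \<times> {..<B}. gram_vec p x * cnj (gram_vec p x'))"
    unfolding gram_vec_def by (subst sum.swap) (simp add: sum.cartesian_product')
  finally show ?thesis .
qed

lemma reduced_purity_le:
  "purity A (\<lambda>x x'. \<Sum>y<B. R (\<phi> x y) (\<phi> x' y)) \<le> (\<Sum>k<K. \<Sum>I<n. (cmod (h k I))\<^sup>2)\<^sup>2"
proof -
  have "purity A (\<lambda>x x'. \<Sum>y<B. R (\<phi> x y) (\<phi> x' y))
      = (\<Sum>x<A. \<Sum>x'<A. (cmod (\<Sum>p\<in>{..<K} \<times> {..<B}. gram_vec p x * cnj (gram_vec p x')))\<^sup>2)"
    unfolding purity_def by (intro sum.cong refl) (simp add: reduced_eq_gram)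
  also have "\<dots> \<le> (\<Sum>p\<in>{..<K} \<times> {..<B}. \<Sum>x<A. (cmod (gram_vec p x))\<^sup>2)\<^sup>2"
    by (rule gram_norm_squared_le)
  also have "(\<Sum>p\<in>{..<K} \<times> {..<B}. \<Sum>x<A. (cmod (gram_vec p x))\<^sup>2) = (\<Sum>k<K. \<Sum>I<n. (cmod (h k I))\<^sup>2)"
    unfolding gram_vec_def sum_bij_betw_pairs[OF \<phi>]
    by (simp add: sum.cartesian_product') (rule sum.cong[OF refl], rule sum.swap)
  finally show ?thesis .
qed

lemma purity_le_reduced_purity:
  "purity n R \<le> real B * purity A (\<lambda>x x'. \<Sum>y<B. R (\<phi> x y) (\<phi> x' y))"
proof -
  define G where "G p q = (\<Sum>x<A. gram_vec p x * cnj (gram_vec q x))" for p q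
  have G_purity: "(\<Sum>p\<in>{..<K} \<times> {..<B}. \<Sum>q\<in>{..<K} \<times> {..<B}. (cmod (G p q))\<^sup>2)
      = purity A (\<lambda>x x'. \<Sum>y<B. R (\<phi> x y) (\<phi> x' y))"
  proof -
    have "(\<Sum>p\<in>{..<K} \<times> {..<B}. \<Sum>q\<in>{..<K} \<times> {..<B}. (cmod (G p q))\<^sup>2)
        = (\<Sum>x<A. \<Sum>x'<A. (cmod (\<Sum>p\<in>{..<K} \<times> {..<B}. gram_vec p x * cnj (gram_vec p x')))\<^sup>2)"
      unfolding G_def by (rule gram_norm_squared_swap[symmetric])
    also have "\<dots> = purity A (\<lambda>x x'. \<Sum>y<B. R (\<phi> x y) (\<phi> x' y))"
      unfolding purity_def by (intro sum.cong refl) (simp add: reduced_eq_gram)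
    finally show ?thesis .
  qed
  have "purity n R = (\<Sum>I<n. \<Sum>J<n. (cmod (\<Sum>k<K. h k I * cnj (h k J)))\<^sup>2)"
    unfolding purity_def using R by (intro sum.cong refl) auto
  also have "\<dots> = (\<Sum>k<K. \<Sum>l<K. (cmod (\<Sum>I<n. h k I * cnj (h l I)))\<^sup>2)"
    by (rule gram_norm_squared_swap)
  also have "\<dots> = (\<Sum>k<K. \<Sum>l<K. (cmod (\<Sum>y<B. G (k, y) (l, y)))\<^sup>2)"
  proof -
    have "(\<Sum>I<n. h k I * cnj (h l I)) = (\<Sum>y<B. G (k, y) (l, y))" for k l
      unfolding sum_bij_betw_pairs[OF \<phi>] G_def gram_vec_def by (subst sum.swap) simp
    then show ?thesis by simp
  qed
  also have "\<dots> \<le> (\<Sum>k<K. \<Sum>l<K. real B * (\<Sum>y<B. \<Sum>y'<B. (cmod (G (k, y) (l, y')))\<^sup>2))"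
  proof (intro sum_mono)
    fix k l
    have "(cmod (\<Sum>y<B. G (k, y) (l, y) * cnj 1))\<^sup>2 \<le> (\<Sum>y<B. (cmod (G (k, y) (l, y)))\<^sup>2) * real B"
      using cmod_sum_mult_cnj_le[of "\<lambda>y. G (k, y) (l, y)" "\<lambda>_. 1" "{..<B}"] by simp
    also have "\<dots> \<le> (\<Sum>y<B. \<Sum>y'<B. (cmod (G (k, y) (l, y')))\<^sup>2) * real B"
      by (intro mult_right_mono sum_mono member_le_sum) auto
    finally show "(cmod (\<Sum>y<B. G (k, y) (l, y)))\<^sup>2 \<le> real B * (\<Sum>y<B. \<Sum>y'<B. (cmod (G (k, y) (l, y')))\<^sup>2)"
      by (simp add: mult.commute)
  qed
  also have "\<dots> = real B * (\<Sum>p\<in>{..<K} \<times> {..<B}. \<Sum>q\<in>{..<K} \<times> {..<B}. (cmod (G p q))\<^sup>2)"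
    by (simp add: sum_distrib_left sum.cartesian_product') (rule sum.cong[OF refl], rule sum.swap)
  also have "\<dots> = real B * purity A (\<lambda>x x'. \<Sum>y<B. R (\<phi> x y) (\<phi> x' y))"
    unfolding G_purity ..
  finally show ?thesis .
qed

end

section \<open>Bounds for density operators\<close>

lemma density_hermitian:
  assumes "density n R"
  shows "hermitian n R"
proof -
  have R: "R \<in> carrier_mat n n" and adj: "adj R = R" using assms unfolding density_def by auto
  have "R $$ (i, j) = cnj (R $$ (j, i))" if "i < n" "j < n" for i j
  proof -
    have "adj R $$ (i, j) = cnj (R $$ (j, i))" using R that unfolding adj_def by auto
    then show ?thesis using adj by simp
  qed
  with R show ?thesis unfolding hermitian_def by blast
qed

lemma density_spectral_decomposition:
  assumes "density n R"
  obtains u lam where "orthonormal n n u" "\<And>k. k < n \<Longrightarrow> 0 \<le> lam k" "(\<Sum>k<n. lam k) = 1"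
    "\<And>i j. i < n \<Longrightarrow> j < n \<Longrightarrow> R $$ (i, j) = (\<Sum>k<n. of_real (lam k) * u k i * cnj (u k j))"
proof -
  have R: "R \<in> carrier_mat n n" and psd: "\<And>v. 0 \<le> Re (\<Sum>i<n. \<Sum>j<n. cnj (v i) * R $$ (i, j) * v j)"
    and tr: "mtrace R = 1" using assms unfolding density_def by auto
  obtain u lam where orth: "orthonormal n n u"
    and eig: "\<And>k i. k < n \<Longrightarrow> i < n \<Longrightarrow> mat_apply n R (u k) i = of_real (lam k) * u k i"
    and R_eq: "\<And>i j. i < n \<Longrightarrow> j < n \<Longrightarrow> R $$ (i, j) = (\<Sum>k<n. of_real (lam k) * u k i * cnj (u k j))"
    using density_hermitian[OF assms] by (rule hermitian_spectral_decomposition) blast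
  have u_u: "cinner n (u k) (u k) = 1" if "k < n" for k using orth that unfolding orthonormal_def by simp
  show ?thesis
  proof (rule that[OF orth _ _ R_eq])
    show "0 \<le> lam k" if "k < n" for k
    proof -
      have "(\<Sum>i<n. \<Sum>j<n. cnj (u k i) * R $$ (i, j) * u k j) = (\<Sum>i<n. cnj (u k i) * mat_apply n R (u k) i)"
        unfolding mat_apply_def by (simp add: sum_distrib_left mult.assoc)
      also have "\<dots> = (\<Sum>i<n. of_real (lam k) * (u k i * cnj (u k i)))"
        using eig that by (intro sum.cong) auto
      also have "\<dots> = of_real (lam k)"
        using u_u[OF that] unfolding cinner_def by (simp add: sum_distrib_left[symmetric])
      finally show ?thesis using psd[of "u k"] by simp
    qed
    have "mtrace R = (\<Sum>i<n. \<Sum>k<n. of_real (lam k) * (u k i * cnj (u k i)))"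
      unfolding mtrace_def using R R_eq by (intro sum.cong) (auto simp: mult.assoc)
    also have "\<dots> = (\<Sum>k<n. of_real (lam k) * cinner n (u k) (u k))"
      unfolding cinner_def by (subst sum.swap) (simp add: sum_distrib_left)
    also have "\<dots> = complex_of_real (\<Sum>k<n. lam k)" using u_u by simp
    finally show "(\<Sum>k<n. lam k) = 1" using tr by (metis of_real_eq_1_iff)
  qed
qed

lemma density_gram_factorization:
  assumes "density n R"
  obtains h where "\<And>i j. i < n \<Longrightarrow> j < n \<Longrightarrow> R $$ (i, j) = (\<Sum>k<n. h k i * cnj (h k j))"
    "(\<Sum>k<n. \<Sum>i<n. (cmod (h k i))\<^sup>2) = 1"
proof -
  obtain u lam where orth: "orthonormal n n u" and lam: "\<And>k. k < n \<Longrightarrow> 0 \<le> lam k"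
    and lam1: "(\<Sum>k<n. lam k) = 1"
    and R_eq: "\<And>i j. i < n \<Longrightarrow> j < n \<Longrightarrow> R $$ (i, j) = (\<Sum>k<n. of_real (lam k) * u k i * cnj (u k j))"
    using assms by (rule density_spectral_decomposition) blast
  define h where "h k i = of_real (sqrt (lam k)) * u k i" for k i
  show ?thesis
  proof
    show "R $$ (i, j) = (\<Sum>k<n. h k i * cnj (h k j))" if "i < n" "j < n" for i j
      unfolding R_eq[OF that] h_def using lam
      by (intro sum.cong refl) (simp add: mult_ac flip: of_real_mult)
    have "(\<Sum>k<n. \<Sum>i<n. (cmod (h k i))\<^sup>2) = (\<Sum>k<n. lam k * Re (cinner n (u k) (u k)))"
      unfolding h_def cinner_self using lam
      by (intro sum.cong refl) (simp add: norm_mult power_mult_distrib sum_distrib_left)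
    also have "\<dots> = 1" using orth lam1 unfolding orthonormal_def by simp
    finally show "(\<Sum>k<n. \<Sum>i<n. (cmod (h k i))\<^sup>2) = 1" .
  qed
qed

lemma density_purity_le_1:
  assumes "density n R"
  shows "purity n (\<lambda>i j. R $$ (i, j)) \<le> 1"
proof -
  obtain h where R: "\<And>i j. i < n \<Longrightarrow> j < n \<Longrightarrow> R $$ (i, j) = (\<Sum>k<n. h k i * cnj (h k j))"
    and h: "(\<Sum>k<n. \<Sum>i<n. (cmod (h k i))\<^sup>2) = 1"
    using assms by (rule density_gram_factorization) blast
  have "purity n (\<lambda>i j. R $$ (i, j)) = (\<Sum>i<n. \<Sum>j<n. (cmod (\<Sum>k<n. h k i * cnj (h k j)))\<^sup>2)"
    unfolding purity_def using R by (intro sum.cong refl) auto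
  also have "\<dots> \<le> 1" using gram_norm_squared_le[of h "{..<n}" "{..<n}"] h by simp
  finally show ?thesis .
qed

lemma density_trace_eq_1: "density n R \<Longrightarrow> (\<Sum>i<n. R $$ (i, i)) = 1"
  unfolding density_def mtrace_def by auto

theorem density_pauli_coeff_bound:
  assumes w: "prim_root d w" and d: "0 < d" and \<sigma>: "density d \<sigma>"
  shows "(\<Sum>r<d * d - 1. (cmod (pauli_coeff d w (\<lambda>i j. \<sigma> $$ (i, j)) (Suc r)))\<^sup>2) \<le> real d - 1"
proof -
  have "(\<Sum>r<d * d - 1. (cmod (pauli_coeff d w (\<lambda>i j. \<sigma> $$ (i, j)) (Suc r)))\<^sup>2)
      = (\<Sum>u<d * d. (cmod (pauli_coeff d w (\<lambda>i j. \<sigma> $$ (i, j)) u))\<^sup>2) - (cmod (pauli_coeff d w (\<lambda>i j. \<sigma> $$ (i, j)) 0))\<^sup>2"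
    using d by (intro sum_lessThan_minus_1_Suc) simp
  also have "pauli_coeff d w (\<lambda>i j. \<sigma> $$ (i, j)) 0 = 1"
    unfolding pauli_coeff_0[OF d] using density_trace_eq_1[OF \<sigma>] .
  also have "(\<Sum>u<d * d. (cmod (pauli_coeff d w (\<lambda>i j. \<sigma> $$ (i, j)) u))\<^sup>2) \<le> real d * 1"
    unfolding pauli_coeff_parseval[OF w d] by (intro mult_left_mono density_purity_le_1[OF \<sigma>]) simp
  finally show ?thesis by simp
qed

lemma density_pauli_coeff_L2_le:
  assumes "prim_root d w" "2 \<le> d" "density d \<sigma>"
  shows "L2_set (\<lambda>r. cmod (pauli_coeff d w (\<lambda>i j. \<sigma> $$ (i, j)) (Suc r))) {..<d ^ 2 - 1} \<le> sqrt (real d - 1)"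
  unfolding L2_set_def power2_eq_square[of d] using assms
  by (intro real_sqrt_le_mono density_pauli_coeff_bound) auto

lemma density_bipartite_purities:
  assumes \<tau>: "density (da * db) \<tau>"
  defines "R \<equiv> \<lambda>I J. \<tau> $$ (I, J)"
  shows "purity (da * db) R \<le> 1"
    and "purity da (reduced_fst db R) \<le> 1" "purity (da * db) R \<le> real db * purity da (reduced_fst db R)"
    and "purity db (reduced_snd da db R) \<le> 1" "purity (da * db) R \<le> real da * purity db (reduced_snd da db R)"
proof -
  obtain h where R_gram: "\<And>I J. I < da * db \<Longrightarrow> J < da * db \<Longrightarrow> R I J = (\<Sum>k<da * db. h k I * cnj (h k J))"
    and h: "(\<Sum>k<da * db. \<Sum>I<da * db. (cmod (h k I))\<^sup>2) = 1"
    using \<tau> unfolding R_def by (rule density_gram_factorization) blast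
  interpret fst: bipartite_gram "da * db" da db "da * db" "\<lambda>x y. x * db + y" h R
    by unfold_locales (rule bij_betw_mult_add, rule R_gram)
  interpret snd: bipartite_gram "da * db" db da "da * db" "\<lambda>y x. x * db + y" h R
    by unfold_locales (rule bij_betw_mult_add_swap, rule R_gram)
  show "purity (da * db) R \<le> 1" using \<tau> unfolding R_def by (rule density_purity_le_1)
  show "purity da (reduced_fst db R) \<le> 1"
    using fst.reduced_purity_le h unfolding reduced_fst_def by simp
  show "purity (da * db) R \<le> real db * purity da (reduced_fst db R)"
    using fst.purity_le_reduced_purity unfolding reduced_fst_def by simp
  show "purity db (reduced_snd da db R) \<le> 1"
    using snd.reduced_purity_le h unfolding reduced_snd_def by simp
  show "purity (da * db) R \<le> real da * purity db (reduced_snd da db R)"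
    using snd.purity_le_reduced_purity unfolding reduced_snd_def by simp
qed

lemma bipartite_purity_arith:
  fixes da db T Pa Pb :: real
  assumes da: "2 \<le> da" and db: "2 \<le> db" and T1: "T \<le> 1"
    and Ta: "T \<le> db * Pa" and Tb: "T \<le> da * Pb"
  shows "da * db * T - da * Pa - db * Pb + 1 \<le> da * db * (1 - 1 / da\<^sup>2 - 1 / db\<^sup>2) + 1"
proof -
  have "T * (da / db) \<le> da * Pa" using mult_right_mono[OF Ta, of "da / db"] da db by (simp add: mult_ac)
  moreover have "T * (db / da) \<le> db * Pb" using mult_right_mono[OF Tb, of "db / da"] da db by (simp add: mult_ac)
  ultimately have "da * db * T - da * Pa - db * Pb + 1 \<le> T * (da * db - da / db - db / da) + 1"
    by (simp add: algebra_simps)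
  also have "\<dots> \<le> 1 * (da * db - da / db - db / da) + 1"
  proof -
    have "da / db \<le> da / 2" using da db by (intro divide_left_mono) auto
    moreover have "db / da \<le> db / 2" using da db by (intro divide_left_mono) auto
    moreover have "da + db \<le> da * db"
      using mult_mono[of 1 "da - 1" 1 "db - 1"] da db by (simp add: algebra_simps)
    ultimately have "0 \<le> da * db - da / db - db / da" using da db by linarith
    then show ?thesis using T1 by (intro add_right_mono mult_right_mono) auto
  qed
  also have "\<dots> = da * db * (1 - 1 / da\<^sup>2 - 1 / db\<^sup>2) + 1"
    using da db by (simp add: field_simps power2_eq_square)
  finally show ?thesis .
qed

theorem density_pauli_coeff2_bounds:
  assumes wa: "prim_root da wa" and wb: "prim_root db wb" and da: "2 \<le> da" and db: "2 \<le> db"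
    and \<tau>: "density (da * db) \<tau>"
  defines "Y \<equiv> pauli_coeff2 da db wa wb (\<lambda>I J. \<tau> $$ (I, J))"
  shows "(\<Sum>r<da * da - 1. (cmod (Y (Suc r) 0))\<^sup>2) \<le> real da - 1"
    and "(\<Sum>r<db * db - 1. (cmod (Y 0 (Suc r)))\<^sup>2) \<le> real db - 1"
    and "(\<Sum>r<da * da - 1. \<Sum>q<db * db - 1. (cmod (Y (Suc r) (Suc q)))\<^sup>2)
          \<le> real da * real db * (1 - 1 / (real da)\<^sup>2 - 1 / (real db)\<^sup>2) + 1"
proof -
  have da0: "0 < da" and db0: "0 < db" using da db by auto
  define R where "R = (\<lambda>I J. \<tau> $$ (I, J))"
  define T where "T = purity (da * db) R"
  define Pa where "Pa = purity da (reduced_fst db R)"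
  define Pb where "Pb = purity db (reduced_snd da db R)"
  note pur = density_bipartite_purities[OF \<tau>, folded R_def T_def Pa_def Pb_def]
  have Y00: "Y 0 0 = 1"
    unfolding Y_def pauli_coeff2_0_0[OF da0 db0] using density_trace_eq_1[OF \<tau>] .
  have A: "(\<Sum>r<da * da - 1. (cmod (Y (Suc r) 0))\<^sup>2) = real da * Pa - 1"
    using sum_lessThan_minus_1_Suc[of "da * da" "\<lambda>u. (cmod (Y u 0))\<^sup>2"] da0 Y00
    unfolding Y_def pauli_coeff2_0_right[OF db0] pauli_coeff_parseval[OF wa da0] Pa_def R_def by simp
  have B: "(\<Sum>r<db * db - 1. (cmod (Y 0 (Suc r)))\<^sup>2) = real db * Pb - 1"
    using sum_lessThan_minus_1_Suc[of "db * db" "\<lambda>u. (cmod (Y 0 u))\<^sup>2"] db0 Y00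
    unfolding Y_def pauli_coeff2_0_left[OF da0 db0] pauli_coeff_parseval[OF wb db0] Pb_def R_def by simp
  show "(\<Sum>r<da * da - 1. (cmod (Y (Suc r) 0))\<^sup>2) \<le> real da - 1"
    unfolding A using pur(2) da0 by (simp add: mult_left_le)
  show "(\<Sum>r<db * db - 1. (cmod (Y 0 (Suc r)))\<^sup>2) \<le> real db - 1"
    unfolding B using pur(4) db0 by (simp add: mult_left_le)
  have "(\<Sum>r<da * da - 1. \<Sum>q<db * db - 1. (cmod (Y (Suc r) (Suc q)))\<^sup>2)
      = (\<Sum>r<da * da - 1. (\<Sum>ub<db * db. (cmod (Y (Suc r) ub))\<^sup>2) - (cmod (Y (Suc r) 0))\<^sup>2)"
    using db0 by (intro sum.cong refl sum_lessThan_minus_1_Suc) simp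
  also have "\<dots> = (\<Sum>r<da * da - 1. \<Sum>ub<db * db. (cmod (Y (Suc r) ub))\<^sup>2) - (\<Sum>r<da * da - 1. (cmod (Y (Suc r) 0))\<^sup>2)"
    by (rule sum_subtractf)
  also have "(\<Sum>r<da * da - 1. \<Sum>ub<db * db. (cmod (Y (Suc r) ub))\<^sup>2)
      = (\<Sum>ua<da * da. \<Sum>ub<db * db. (cmod (Y ua ub))\<^sup>2) - (\<Sum>ub<db * db. (cmod (Y 0 ub))\<^sup>2)"
    using da0 by (intro sum_lessThan_minus_1_Suc) simp
  also have "(\<Sum>ua<da * da. \<Sum>ub<db * db. (cmod (Y ua ub))\<^sup>2) = real da * real db * T"
    unfolding Y_def T_def R_def by (rule pauli_coeff2_parseval[OF wa wb da0 db0])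
  also have "(\<Sum>ub<db * db. (cmod (Y 0 ub))\<^sup>2) = real db * Pb"
    using B db0 Y00 sum_lessThan_minus_1_Suc[of "db * db" "\<lambda>u. (cmod (Y 0 u))\<^sup>2"] by simp
  finally have "(\<Sum>r<da * da - 1. \<Sum>q<db * db - 1. (cmod (Y (Suc r) (Suc q)))\<^sup>2)
      = real da * real db * T - real da * Pa - real db * Pb + 1" unfolding A by simp
  also have "\<dots> \<le> real da * real db * (1 - 1 / (real da)\<^sup>2 - 1 / (real db)\<^sup>2) + 1"
    using da db pur by (intro bipartite_purity_arith) auto
  finally show "(\<Sum>r<da * da - 1. \<Sum>q<db * db - 1. (cmod (Y (Suc r) (Suc q)))\<^sup>2)
      \<le> real da * real db * (1 - 1 / (real da)\<^sup>2 - 1 / (real db)\<^sup>2) + 1" .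
qed

section \<open>Separable tripartite states\<close>

lemma mtrace_mult_adj:
  assumes "E \<in> carrier_mat D D" "K \<in> carrier_mat D D"
  shows "mtrace (E * adj K) = (\<Sum>i<D. \<Sum>j<D. E $$ (i,j) * cnj (K $$ (i,j)))"
  unfolding mtrace_def using assms
  by (auto simp: adj_def scalar_prod_def atLeast0LessThan intro!: sum.cong)

lemma pauli_carrier_mat: "pauli d w u \<in> carrier_mat d d"
  unfolding pauli_def by auto

lemma coord_mixed_radix:
  assumes "x1 < d 1" "x2 < d 2" "x3 < d 3"
  shows "coord d ((x1 * d 2 + x2) * d 3 + x3) 1 = x1" "coord d ((x1 * d 2 + x2) * d 3 + x3) 2 = x2"
    "coord d ((x1 * d 2 + x2) * d 3 + x3) 3 = x3"
proof -
  have q: "((x1 * d 2 + x2) * d 3 + x3) div d 3 = x1 * d 2 + x2" "((x1 * d 2 + x2) * d 3 + x3) mod d 3 = x3"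
    using assms by auto
  have "((x1 * d 2 + x2) * d 3 + x3) div (d 2 * d 3) = ((x1 * d 2 + x2) * d 3 + x3) div d 3 div d 2"
    by (metis div_mult2_eq mult.commute)
  then show "coord d ((x1 * d 2 + x2) * d 3 + x3) 1 = x1"
    unfolding coord_def using q assms by simp
  show "coord d ((x1 * d 2 + x2) * d 3 + x3) 2 = x2" "coord d ((x1 * d 2 + x2) * d 3 + x3) 3 = x3"
    unfolding coord_def using q assms by simp_all
qed

lemma sum_coord_split:
  "(\<Sum>i<totdim d. G (coord d i 1) (coord d i 2) (coord d i 3)) = (\<Sum>x1<d 1. \<Sum>x2<d 2. \<Sum>x3<d 3. G x1 x2 x3)"
  unfolding totdim_def sum_lessThan_mult_split
proof (intro sum.cong refl)
  fix x1 x2 x3 assume "x1 \<in> {..<d 1}" "x2 \<in> {..<d 2}" "x3 \<in> {..<d 3}"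
  then show "G (coord d ((x1 * d 2 + x2) * d 3 + x3) 1) (coord d ((x1 * d 2 + x2) * d 3 + x3) 2)
      (coord d ((x1 * d 2 + x2) * d 3 + x3) 3) = G x1 x2 x3"
    by (simp only: lessThan_iff coord_mixed_radix)
qed

lemma perm123_distinct:
  assumes "{f, g, h} = {1, 2, 3::nat}"
  shows "f \<noteq> g" "f \<noteq> h" "g \<noteq> h"
proof -
  have "card {f, g, h} = 3" using assms by simp
  then show "f \<noteq> g" "f \<noteq> h" "g \<noteq> h" by (auto simp: card_insert_if split: if_splits)
qed

lemma perm123_min_max:
  assumes "{f, g, h} = {1, 2, 3::nat}"
  shows "{f, min g h, max g h} = {1, 2, 3::nat}" "min g h < max g h"
proof -
  have "g \<noteq> h" using perm123_distinct[OF assms] by simp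
  then have "{min g h, max g h} = {g, h}" by (auto simp: min_def max_def)
  then show "{f, min g h, max g h} = {1, 2, 3::nat}" using assms by simp
  show "min g h < max g h" using \<open>g \<noteq> h\<close> by (auto simp: min_def max_def)
qed

lemma perm123_cases:
  assumes "{f, a, b} = {1, 2, 3::nat}" "a < b"
  shows "(f = 1 \<and> a = 2 \<and> b = 3) \<or> (f = 2 \<and> a = 1 \<and> b = 3) \<or> (f = 3 \<and> a = 1 \<and> b = 2)"
proof -
  have m: "f \<in> {1,2,3}" "a \<in> {1,2,3}" "b \<in> {1,2,3}" "1 \<in> {f,a,b}" "2 \<in> {f,a,b}" "3 \<in> {f,a,b}"
    using assms(1) by blast+
  from m(1) have "f = 1 \<or> f = 2 \<or> f = 3" by simp
  moreover from m(2) have "a = 1 \<or> a = 2 \<or> a = 3" by simp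
  moreover from m(3) have "b = 1 \<or> b = 2 \<or> b = 3" by simp
  moreover from m(4) have "f = 1 \<or> a = 1 \<or> b = 1" by auto
  moreover from m(5) have "f = 2 \<or> a = 2 \<or> b = 2" by auto
  moreover from m(6) have "f = 3 \<or> a = 3 \<or> b = 3" by auto
  ultimately show ?thesis using assms(2) by linarith
qed

lemma sum_coord_perm:
  assumes p: "{f, a, b} = {1, 2, 3::nat}" "a < b"
  shows "(\<Sum>i<totdim d. G (coord d i f) (coord d i a) (coord d i b))
       = (\<Sum>x<d f. \<Sum>y<d a. \<Sum>z<d b. G x y z)"
  using perm123_cases[OF p]
proof (elim disjE conjE)
  assume "f = 1" "a = 2" "b = 3"
  thus ?thesis using sum_coord_split[where G = G] by simp
next
  assume fab: "f = 2" "a = 1" "b = 3"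
  have "(\<Sum>i<totdim d. G (coord d i 2) (coord d i 1) (coord d i 3))
      = (\<Sum>x1<d 1. \<Sum>x2<d 2. \<Sum>x3<d 3. G x2 x1 x3)"
    using sum_coord_split[where G = "\<lambda>x1 x2 x3. G x2 x1 x3"] by simp
  also have "\<dots> = (\<Sum>x2<d 2. \<Sum>x1<d 1. \<Sum>x3<d 3. G x2 x1 x3)" by (rule sum.swap)
  finally show ?thesis using fab by simp
next
  assume fab: "f = 3" "a = 1" "b = 2"
  have "(\<Sum>i<totdim d. G (coord d i 3) (coord d i 1) (coord d i 2))
      = (\<Sum>x1<d 1. \<Sum>x2<d 2. \<Sum>x3<d 3. G x3 x1 x2)"
    using sum_coord_split[where G = "\<lambda>x1 x2 x3. G x3 x1 x2"] by simp
  also have "\<dots> = (\<Sum>x1<d 1. \<Sum>x3<d 3. \<Sum>x2<d 2. G x3 x1 x2)" by (rule sum.cong[OF refl], rule sum.swap)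
  also have "\<dots> = (\<Sum>x3<d 3. \<Sum>x1<d 1. \<Sum>x2<d 2. G x3 x1 x2)" by (rule sum.swap)
  finally show ?thesis using fab by simp
qed

lemma kron3_pauli_entry:
  assumes i: "i < totdim d" and j: "j < totdim d"
  shows "kron (kron (pauli (d 1) w1 u1) (pauli (d 2) w2 u2)) (pauli (d 3) w3 u3) $$ (i,j)
    = pauli (d 1) w1 u1 $$ (coord d i 1, coord d j 1) * pauli (d 2) w2 u2 $$ (coord d i 2, coord d j 2)
      * pauli (d 3) w3 u3 $$ (coord d i 3, coord d j 3)"
proof -
  let ?P1 = "pauli (d 1) w1 u1" and ?P2 = "pauli (d 2) w2 u2" and ?P3 = "pauli (d 3) w3 u3"
  have c1: "?P1 \<in> carrier_mat (d 1) (d 1)" and c2: "?P2 \<in> carrier_mat (d 2) (d 2)"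
    and c3: "?P3 \<in> carrier_mat (d 3) (d 3)" by (rule pauli_carrier_mat)+
  have i3: "i div d 3 < d 1 * d 2" "j div d 3 < d 1 * d 2"
    using i j unfolding totdim_def by (auto intro: less_mult_imp_div_less)
  have "kron (kron ?P1 ?P2) ?P3 $$ (i,j) = kron ?P1 ?P2 $$ (i div d 3, j div d 3) * ?P3 $$ (i mod d 3, j mod d 3)"
    unfolding kron_def[of "kron ?P1 ?P2" ?P3] using i j c1 c2 c3
    by (simp add: kron_def totdim_def)
  also have "kron ?P1 ?P2 $$ (i div d 3, j div d 3) = ?P1 $$ (i div d 3 div d 2, j div d 3 div d 2)
      * ?P2 $$ (i div d 3 mod d 2, j div d 3 mod d 2)"
    unfolding kron_def[of ?P1 ?P2] using i3 c1 c2 by simp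
  also have "i div d 3 div d 2 = coord d i 1" unfolding coord_def by (simp add: div_mult2_eq[symmetric] mult.commute)
  also have "j div d 3 div d 2 = coord d j 1" unfolding coord_def by (simp add: div_mult2_eq[symmetric] mult.commute)
  finally show ?thesis unfolding coord_def by simp
qed

lemma sum_product_interleaved:
  fixes A :: "nat \<Rightarrow> nat \<Rightarrow> complex"
  shows "(\<Sum>x\<in>X. \<Sum>p\<in>Pp. \<Sum>q\<in>Q. \<Sum>x'\<in>X. \<Sum>p'\<in>Pp. \<Sum>q'\<in>Q. A x x' * B p q p' q')
   = (\<Sum>x\<in>X. \<Sum>x'\<in>X. A x x') * (\<Sum>p\<in>Pp. \<Sum>q\<in>Q. \<Sum>p'\<in>Pp. \<Sum>q'\<in>Q. B p q p' q')"
proof -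
  define C where "C p q = (\<Sum>p'\<in>Pp. \<Sum>q'\<in>Q. B p q p' q')" for p q
  have "(\<Sum>x\<in>X. \<Sum>p\<in>Pp. \<Sum>q\<in>Q. \<Sum>x'\<in>X. \<Sum>p'\<in>Pp. \<Sum>q'\<in>Q. A x x' * B p q p' q')
      = (\<Sum>x\<in>X. \<Sum>p\<in>Pp. \<Sum>q\<in>Q. \<Sum>x'\<in>X. A x x' * C p q)"
    unfolding C_def by (simp add: sum_distrib_left)
  also have "\<dots> = (\<Sum>x\<in>X. \<Sum>x'\<in>X. \<Sum>p\<in>Pp. \<Sum>q\<in>Q. A x x' * C p q)"
  proof (rule sum.cong[OF refl])
    fix x
    have "(\<Sum>p\<in>Pp. \<Sum>q\<in>Q. \<Sum>x'\<in>X. A x x' * C p q) = (\<Sum>p\<in>Pp. \<Sum>x'\<in>X. \<Sum>q\<in>Q. A x x' * C p q)"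
      by (rule sum.cong[OF refl], rule sum.swap)
    also have "\<dots> = (\<Sum>x'\<in>X. \<Sum>p\<in>Pp. \<Sum>q\<in>Q. A x x' * C p q)" by (rule sum.swap)
    finally show "(\<Sum>p\<in>Pp. \<Sum>q\<in>Q. \<Sum>x'\<in>X. A x x' * C p q) = (\<Sum>x'\<in>X. \<Sum>p\<in>Pp. \<Sum>q\<in>Q. A x x' * C p q)" .
  qed
  also have "\<dots> = (\<Sum>x\<in>X. \<Sum>x'\<in>X. A x x' * (\<Sum>p\<in>Pp. \<Sum>q\<in>Q. C p q))"
    by (simp only: sum_distrib_left)
  also have "\<dots> = (\<Sum>x\<in>X. \<Sum>x'\<in>X. A x x') * (\<Sum>p\<in>Pp. \<Sum>q\<in>Q. C p q)"
    by (simp only: sum_distrib_right)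
  finally show ?thesis unfolding C_def .
qed

lemma kron3_pauli_entry_perm:
  assumes fab: "{f, a, b} = {1, 2, 3::nat}" "a < b" and i: "i < totdim d" and j: "j < totdim d"
  shows "kron (kron (pauli (d 1) (w 1) (u 1)) (pauli (d 2) (w 2) (u 2))) (pauli (d 3) (w 3) (u 3)) $$ (i, j)
    = pauli (d f) (w f) (u f) $$ (coord d i f, coord d j f)
      * (pauli (d a) (w a) (u a) $$ (coord d i a, coord d j a) * pauli (d b) (w b) (u b) $$ (coord d i b, coord d j b))"
  unfolding kron3_pauli_entry[OF i j]
  using perm123_cases[OF fab] by (elim disjE conjE) (simp_all add: mult_ac)

lemma mtrace_embed_prod_pauli:
  assumes d1: "0 < d 1" and d2: "0 < d 2" and d3: "0 < d 3"
    and perm: "{f, g, h} = {1, 2, 3::nat}"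
  shows "mtrace (embed_prod d f g h \<sigma> \<tau> * adj (kron (kron (pauli (d 1) (w 1) (u 1)) (pauli (d 2) (w 2) (u 2))) (pauli (d 3) (w 3) (u 3))))
    = pauli_coeff (d f) (w f) (\<lambda>i j. \<sigma> $$ (i,j)) (u f) *
      pauli_coeff2 (d (min g h)) (d (max g h)) (w (min g h)) (w (max g h)) (\<lambda>I J. \<tau> $$ (I,J)) (u (min g h)) (u (max g h))"
proof -
  define a where "a = min g h"
  define b where "b = max g h"
  have fab: "{f, a, b} = {1, 2, 3::nat}" "a < b" unfolding a_def b_def using perm123_min_max[OF perm] by auto
  define P where "P k = pauli (d k) (w k) (u k)" for k
  define K where "K = kron (kron (P 1) (P 2)) (P 3)"
  define E where "E = embed_prod d f g h \<sigma> \<tau>"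
  define D where "D = totdim d"
  have E: "E \<in> carrier_mat D D" unfolding E_def embed_prod_def D_def Let_def by auto
  have K: "K \<in> carrier_mat D D" unfolding K_def kron_def D_def totdim_def P_def pauli_def by auto
  have db: "0 < d b" and df: "0 < d f" and da: "0 < d a"
    using fab d1 d2 d3 perm123_cases[OF fab] by auto
  define A where "A x x' = \<sigma> $$ (x, x') * cnj (P f $$ (x, x'))" for x x'
  define B where "B p q p' q' = \<tau> $$ (p * d b + q, p' * d b + q') * cnj (P a $$ (p, p') * P b $$ (q, q'))" for p q p' q'
  have entry: "E $$ (i,j) * cnj (K $$ (i,j)) =
      A (coord d i f) (coord d j f) * B (coord d i a) (coord d i b) (coord d j a) (coord d j b)"
    if "i < D" "j < D" for i j
  proof -
    have Ee: "E $$ (i,j) = \<sigma> $$ (coord d i f, coord d j f) *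
        \<tau> $$ (coord d i a * d b + coord d i b, coord d j a * d b + coord d j b)"
      unfolding E_def embed_prod_def Let_def a_def[symmetric] b_def[symmetric] using that D_def by simp
    have "K $$ (i,j) = P f $$ (coord d i f, coord d j f) * (P a $$ (coord d i a, coord d j a) * P b $$ (coord d i b, coord d j b))"
      unfolding K_def P_def using that unfolding D_def by (rule kron3_pauli_entry_perm[OF fab])
    then show ?thesis unfolding Ee A_def B_def by (simp add: mult_ac)
  qed
  have "mtrace (E * adj K) = (\<Sum>i<D. \<Sum>j<D. E $$ (i,j) * cnj (K $$ (i,j)))"
    by (rule mtrace_mult_adj[OF E K])
  also have "\<dots> = (\<Sum>i<D. \<Sum>j<D. A (coord d i f) (coord d j f) * B (coord d i a) (coord d i b) (coord d j a) (coord d j b))"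
    using entry by (intro sum.cong refl) auto
  also have "\<dots> = (\<Sum>i<D. \<Sum>x'<d f. \<Sum>p'<d a. \<Sum>q'<d b. A (coord d i f) x' * B (coord d i a) (coord d i b) p' q')"
    unfolding D_def by (rule sum.cong[OF refl], rule sum_coord_perm[OF fab])
  also have "\<dots> = (\<Sum>x<d f. \<Sum>p<d a. \<Sum>q<d b. \<Sum>x'<d f. \<Sum>p'<d a. \<Sum>q'<d b. A x x' * B p q p' q')"
    unfolding D_def by (rule sum_coord_perm[OF fab])
  also have "\<dots> = (\<Sum>x<d f. \<Sum>x'<d f. A x x') * (\<Sum>p<d a. \<Sum>q<d b. \<Sum>p'<d a. \<Sum>q'<d b. B p q p' q')"
    by (rule sum_product_interleaved)
  also have "(\<Sum>x<d f. \<Sum>x'<d f. A x x') = pauli_coeff (d f) (w f) (\<lambda>i j. \<sigma> $$ (i,j)) (u f)"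
    unfolding A_def pauli_coeff_def P_def ..
  also have "(\<Sum>p<d a. \<Sum>q<d b. \<Sum>p'<d a. \<Sum>q'<d b. B p q p' q')
      = pauli_coeff2 (d a) (d b) (w a) (w b) (\<lambda>I J. \<tau> $$ (I,J)) (u a) (u b)"
    unfolding B_def pauli_coeff2_eq[OF db] P_def ..
  finally show ?thesis unfolding E_def K_def P_def a_def b_def .
qed

lemma assign_apply:
  assumes "{f, g, h} = {1, 2, 3::nat}"
  shows "assign f g h a b c f = a" "assign f g h a b c g = b" "assign f g h a b c h = c"
  using perm123_distinct[OF assms] unfolding assign_def by auto

lemma tcoef_separable:
  assumes d1: "0 < d 1" and d2: "0 < d 2" and d3: "0 < d 3"
    and perm: "{f, g, h} = {1, 2, 3::nat}"
    and rho: "\<rho> = mat (totdim d) (totdim d) (\<lambda>(i, j).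
               \<Sum>s<n. complex_of_real (p s) * embed_prod d f g h (\<sigma> s) (\<tau> s) $$ (i, j))"
  shows "tcoef d w \<rho> u = (\<Sum>s<n. complex_of_real (p s) * (pauli_coeff (d f) (w f) (\<lambda>i j. \<sigma> s $$ (i,j)) (u f) *
      pauli_coeff2 (d (min g h)) (d (max g h)) (w (min g h)) (w (max g h)) (\<lambda>I J. \<tau> s $$ (I,J)) (u (min g h)) (u (max g h))))"
proof -
  define D where "D = totdim d"
  define K where "K = kron (kron (pauli (d 1) (w 1) (u 1)) (pauli (d 2) (w 2) (u 2))) (pauli (d 3) (w 3) (u 3))"
  have K: "K \<in> carrier_mat D D" unfolding K_def kron_def D_def totdim_def pauli_def by auto
  have R: "\<rho> \<in> carrier_mat D D" unfolding rho D_def by auto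
  have E: "embed_prod d f g h (\<sigma> s) (\<tau> s) \<in> carrier_mat D D" for s
    unfolding embed_prod_def D_def Let_def by auto
  have "tcoef d w \<rho> u = mtrace (\<rho> * adj K)" unfolding tcoef_def K_def ..
  also have "\<dots> = (\<Sum>i<D. \<Sum>j<D. \<rho> $$ (i,j) * cnj (K $$ (i,j)))" by (rule mtrace_mult_adj[OF R K])
  also have "\<dots> = (\<Sum>i<D. \<Sum>j<D. \<Sum>s<n. complex_of_real (p s) * (embed_prod d f g h (\<sigma> s) (\<tau> s) $$ (i, j) * cnj (K $$ (i,j))))"
    unfolding rho D_def by (intro sum.cong refl) (simp add: sum_distrib_right mult.assoc)
  also have "\<dots> = (\<Sum>s<n. complex_of_real (p s) * (\<Sum>i<D. \<Sum>j<D. embed_prod d f g h (\<sigma> s) (\<tau> s) $$ (i, j) * cnj (K $$ (i,j))))"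
    by (simp add: sum_distrib_left) (subst sum.swap, rule sum.cong[OF refl], rule sum.swap)
  also have "\<dots> = (\<Sum>s<n. complex_of_real (p s) * mtrace (embed_prod d f g h (\<sigma> s) (\<tau> s) * adj K))"
    using mtrace_mult_adj[OF E K] by simp
  also have "\<dots> = (\<Sum>s<n. complex_of_real (p s) * (pauli_coeff (d f) (w f) (\<lambda>i j. \<sigma> s $$ (i,j)) (u f) *
      pauli_coeff2 (d (min g h)) (d (max g h)) (w (min g h)) (w (max g h)) (\<lambda>I J. \<tau> s $$ (I,J)) (u (min g h)) (u (max g h))))"
    unfolding K_def using mtrace_embed_prod_pauli[OF d1 d2 d3 perm] by simp
  finally show ?thesis .
qed

text \<open>\<open>embed_prod\<close> lets \<open>\<tau>\<close> act on the factors \<open>min g h\<close> and \<open>max g h\<close> in this order;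
  \<open>pair_coeff d w g h \<tau> b c\<close> is its Pauli coefficient with index \<open>b\<close> on factor \<open>g\<close> and \<open>c\<close> on \<open>h\<close>.\<close>

definition pair_coeff :: "(nat \<Rightarrow> nat) \<Rightarrow> (nat \<Rightarrow> complex) \<Rightarrow> nat \<Rightarrow> nat \<Rightarrow> complex mat \<Rightarrow> nat \<Rightarrow> nat \<Rightarrow> complex" where
  "pair_coeff d w g h \<tau> b c = (if g < h
     then pauli_coeff2 (d g) (d h) (w g) (w h) (\<lambda>I J. \<tau> $$ (I, J)) b c
     else pauli_coeff2 (d h) (d g) (w h) (w g) (\<lambda>I J. \<tau> $$ (I, J)) c b)"

lemma tcoef_assign_separable:
  assumes d1: "0 < d 1" and d2: "0 < d 2" and d3: "0 < d 3"
    and perm: "{f, g, h} = {1, 2, 3::nat}"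
    and \<rho>: "\<rho> = mat (totdim d) (totdim d) (\<lambda>(i, j).
               \<Sum>s<n. complex_of_real (p s) * embed_prod d f g h (\<sigma> s) (\<tau> s) $$ (i, j))"
  shows "tcoef d w \<rho> (assign f g h a b c)
    = (\<Sum>s<n. of_real (p s) * (pauli_coeff (d f) (w f) (\<lambda>i j. \<sigma> s $$ (i, j)) a * pair_coeff d w g h (\<tau> s) b c))"
proof -
  have u: "assign f g h a b c f = a" "assign f g h a b c g = b" "assign f g h a b c h = c"
    by (rule assign_apply[OF perm])+
  have "g \<noteq> h" using perm123_distinct(3)[OF perm] .
  then show ?thesis
    unfolding tcoef_separable[OF d1 d2 d3 perm \<rho>] pair_coeff_def using u
    by (cases "g < h") (simp_all add: min_def max_def)
qed

lemma N_fgh_entry_separable: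
  fixes X :: "nat \<Rightarrow> nat \<Rightarrow> complex" and Y :: "nat \<Rightarrow> nat \<Rightarrow> nat \<Rightarrow> complex"
    and d :: "nat \<Rightarrow> nat" and g h :: nat and \<alpha> \<beta> :: real
  assumes tc: "\<And>a b c. tcoef d w \<rho> (assign f g h a b c) = (\<Sum>s<n. of_real (p s) * (X s a * Y s b c))"
    and r: "r < d f ^ 2 - 1" and j: "j < (d g ^ 2 - 1) * (d h ^ 2 - 1)"
  defines "Z \<equiv> \<lambda>s j. of_real \<alpha> * (if j < d g ^ 2 - 1 then Y s (j + 1) 0 else 0)
      + of_real \<beta> * Y s (j div (d h ^ 2 - 1) + 1) (j mod (d h ^ 2 - 1) + 1)"
  shows "N_fgh d w \<rho> f g h \<alpha> \<beta> $$ (r, j) = (\<Sum>s<n. of_real (p s) * X s (Suc r) * Z s j)"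
proof -
  have "N_fgh d w \<rho> f g h \<alpha> \<beta> $$ (r, j)
      = of_real \<alpha> * (if j < d g ^ 2 - 1 then tcoef d w \<rho> (assign f g h (r + 1) (j + 1) 0) else 0)
        + of_real \<beta> * tcoef d w \<rho> (assign f g h (r + 1) (j div (d h ^ 2 - 1) + 1) (j mod (d h ^ 2 - 1) + 1))"
    unfolding N_fgh_def S0_fg_def S_fg_def S_fgh_def using r j by auto
  also have "\<dots> = (\<Sum>s<n. of_real (p s) * X s (Suc r) * Z s j)"
    unfolding tc Z_def
    by (cases "j < d g ^ 2 - 1")
       (simp_all add: sum_distrib_left sum.distrib algebra_simps)
  finally show ?thesis .
qed

lemma pair_coeff_bounds:
  assumes wg: "prim_root (d g) (w g)" and wh: "prim_root (d h) (w h)"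
    and dg: "2 \<le> d g" and dh: "2 \<le> d h" and gh: "g \<noteq> h" and \<tau>: "density (d g * d h) \<tau>"
  shows "(\<Sum>b<d g ^ 2 - 1. (cmod (pair_coeff d w g h \<tau> (b + 1) 0))\<^sup>2) \<le> real (d g) - 1"
    and "(\<Sum>b<d g ^ 2 - 1. \<Sum>c<d h ^ 2 - 1. (cmod (pair_coeff d w g h \<tau> (b + 1) (c + 1)))\<^sup>2)
          \<le> real (d g) * real (d h) * (1 - 1 / real (d g) ^ 2 - 1 / real (d h) ^ 2) + 1"
proof -
  consider "g < h" | "h < g" using gh by linarith
  then have "(\<Sum>b<d g ^ 2 - 1. (cmod (pair_coeff d w g h \<tau> (b + 1) 0))\<^sup>2) \<le> real (d g) - 1 \<and>
    (\<Sum>b<d g ^ 2 - 1. \<Sum>c<d h ^ 2 - 1. (cmod (pair_coeff d w g h \<tau> (b + 1) (c + 1)))\<^sup>2)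
          \<le> real (d g) * real (d h) * (1 - 1 / real (d g) ^ 2 - 1 / real (d h) ^ 2) + 1"
  proof cases
    case 1
    then show ?thesis
      using density_pauli_coeff2_bounds(1,3)[OF wg wh dg dh \<tau>]
      unfolding pair_coeff_def by (simp add: power2_eq_square)
  next
    case 2
    have \<tau>': "density (d h * d g) \<tau>" using \<tau> by (simp add: mult.commute)
    note bounds = density_pauli_coeff2_bounds(2,3)[OF wh wg dh dg \<tau>']
    have "(\<Sum>b<d g ^ 2 - 1. \<Sum>c<d h ^ 2 - 1. (cmod (pair_coeff d w g h \<tau> (b + 1) (c + 1)))\<^sup>2)
        = (\<Sum>c<d h * d h - 1. \<Sum>b<d g * d g - 1. (cmod (pauli_coeff2 (d h) (d g) (w h) (w g) (\<lambda>I J. \<tau> $$ (I, J)) (Suc c) (Suc b)))\<^sup>2)"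
      unfolding pair_coeff_def using 2 by (simp add: power2_eq_square) (rule sum.swap)
    also have "\<dots> \<le> real (d g) * real (d h) * (1 - 1 / real (d g) ^ 2 - 1 / real (d h) ^ 2) + 1"
      using bounds(2) by (simp add: algebra_simps)
    finally show ?thesis using bounds(1) 2 unfolding pair_coeff_def by (simp add: power2_eq_square)
  qed
  then show "(\<Sum>b<d g ^ 2 - 1. (cmod (pair_coeff d w g h \<tau> (b + 1) 0))\<^sup>2) \<le> real (d g) - 1"
    and "(\<Sum>b<d g ^ 2 - 1. \<Sum>c<d h ^ 2 - 1. (cmod (pair_coeff d w g h \<tau> (b + 1) (c + 1)))\<^sup>2)
          \<le> real (d g) * real (d h) * (1 - 1 / real (d g) ^ 2 - 1 / real (d h) ^ 2) + 1" by auto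
qed

lemma L2_set_column_le:
  fixes Y :: "nat \<Rightarrow> nat \<Rightarrow> complex"
  assumes mh: "0 < mh"
    and Y1: "(\<Sum>b<mg. (cmod (Y (b + 1) 0))\<^sup>2) \<le> B1"
    and Y2: "(\<Sum>b<mg. \<Sum>c<mh. (cmod (Y (b + 1) (c + 1)))\<^sup>2) \<le> B2"
  shows "L2_set (\<lambda>j. cmod (of_real \<alpha> * (if j < mg then Y (j + 1) 0 else 0)
      + of_real \<beta> * Y (j div mh + 1) (j mod mh + 1))) {..<mg * mh}
    \<le> \<bar>\<alpha>\<bar> * sqrt B1 + \<bar>\<beta>\<bar> * sqrt B2"
proof -
  let ?Z1 = "\<lambda>j. cmod (if j < mg then Y (j + 1) 0 else 0)"
  let ?Z2 = "\<lambda>j. cmod (Y (j div mh + 1) (j mod mh + 1))"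
  have "(\<Sum>j<mg * mh. (?Z1 j)\<^sup>2) = (\<Sum>b<mg. (cmod (Y (b + 1) 0))\<^sup>2)"
  proof -
    have "(\<Sum>j<mg * mh. (?Z1 j)\<^sup>2) = (\<Sum>j\<in>{..<mg * mh}. if j \<in> {..<mg} then (cmod (Y (j + 1) 0))\<^sup>2 else 0)"
      by (intro sum.cong refl) auto
    also have "\<dots> = (\<Sum>j\<in>{..<mg * mh} \<inter> {..<mg}. (cmod (Y (j + 1) 0))\<^sup>2)"
      by (rule sum.inter_restrict[symmetric]) simp
    also have "{..<mg * mh} \<inter> {..<mg} = {..<mg}" using mh by (intro Int_absorb1) simp
    finally show ?thesis by simp
  qed
  then have Z1: "L2_set ?Z1 {..<mg * mh} \<le> sqrt B1"
    unfolding L2_set_def using Y1 by (simp add: real_sqrt_le_mono)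
  have "(\<Sum>j<mg * mh. (?Z2 j)\<^sup>2) = (\<Sum>b<mg. \<Sum>c<mh. (cmod (Y (b + 1) (c + 1)))\<^sup>2)"
    unfolding sum_lessThan_mult_split using mh by (intro sum.cong refl) auto
  then have Z2: "L2_set ?Z2 {..<mg * mh} \<le> sqrt B2"
    unfolding L2_set_def using Y2 by (simp add: real_sqrt_le_mono)
  have "L2_set (\<lambda>j. cmod (of_real \<alpha> * (if j < mg then Y (j + 1) 0 else 0)
      + of_real \<beta> * Y (j div mh + 1) (j mod mh + 1))) {..<mg * mh}
    \<le> L2_set (\<lambda>j. \<bar>\<alpha>\<bar> * ?Z1 j + \<bar>\<beta>\<bar> * ?Z2 j) {..<mg * mh}"
    by (intro L2_set_mono) (auto simp: norm_mult intro: order_trans[OF norm_triangle_ineq])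
  also have "\<dots> \<le> \<bar>\<alpha>\<bar> * L2_set ?Z1 {..<mg * mh} + \<bar>\<beta>\<bar> * L2_set ?Z2 {..<mg * mh}"
    by (rule order_trans[OF L2_set_triangle_ineq]) (simp add: L2_set_right_distrib)
  also have "\<dots> \<le> \<bar>\<alpha>\<bar> * sqrt B1 + \<bar>\<beta>\<bar> * sqrt B2"
    using Z1 Z2 by (intro add_mono mult_left_mono) auto
  finally show ?thesis .
qed

theorem theorem1:
  fixes d :: "nat \<Rightarrow> nat" and w :: "nat \<Rightarrow> complex" and \<rho> :: "complex mat"
    and f g h :: nat and \<alpha> \<beta> :: real
  assumes dims: "\<forall>s\<in>{1, 2, 3}. d s \<ge> 2"
    and roots: "\<forall>s\<in>{1, 2, 3}. prim_root (d s) (w s)"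
    and dens: "density (totdim d) \<rho>"
    and perm: "{f, g, h} = {1, 2, 3}"
    and sep: "separable_bip d f g h \<rho>"
  shows "trace_norm (N_fgh d w \<rho> f g h \<alpha> \<beta>)
           \<le> sqrt (real (d f) - 1) *
              (\<bar>\<alpha>\<bar> * sqrt (real (d g) - 1) +
               \<bar>\<beta>\<bar> * sqrt (real (d g) * real (d h) *
                            (1 - 1 / real (d g) ^ 2 - 1 / real (d h) ^ 2) + 1))"
proof -
  obtain n :: nat and p :: "nat \<Rightarrow> real" and \<sigma> \<tau> :: "nat \<Rightarrow> complex mat"
    where sp: "\<forall>s<n. p s > 0 \<and> density (d f) (\<sigma> s) \<and> density (d g * d h) (\<tau> s)"
      and p1: "(\<Sum>s<n. p s) = 1"
      and \<rho>: "\<rho> = mat (totdim d) (totdim d) (\<lambda>(i, j).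
               \<Sum>s<n. complex_of_real (p s) * embed_prod d f g h (\<sigma> s) (\<tau> s) $$ (i, j))"
    using sep unfolding separable_bip_def by blast
  have "f \<in> {1, 2, 3}" "g \<in> {1, 2, 3}" "h \<in> {1, 2, 3}" using perm by blast+
  then have d: "2 \<le> d f" "2 \<le> d g" "2 \<le> d h"
    and w: "prim_root (d f) (w f)" "prim_root (d g) (w g)" "prim_root (d h) (w h)"
    using dims roots by blast+
  have d0: "0 < d 1" "0 < d 2" "0 < d 3" using dims by auto
  have mh: "0 < d h ^ 2 - 1" using power_mono[OF d(3), of 2] by simp
  define X where "X s r = pauli_coeff (d f) (w f) (\<lambda>i j. \<sigma> s $$ (i, j)) (Suc r)" for s r
  define Y where "Y s = pair_coeff d w g h (\<tau> s)" for s
  define Z where "Z s j = of_real \<alpha> * (if j < d g ^ 2 - 1 then Y s (j + 1) 0 else 0)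
    + of_real \<beta> * Y s (j div (d h ^ 2 - 1) + 1) (j mod (d h ^ 2 - 1) + 1)" for s j
  show ?thesis
  proof (rule trace_norm_convex_rank_one_le[where p = p and x = X and z = Z])
    show "N_fgh d w \<rho> f g h \<alpha> \<beta> \<in> carrier_mat (d f ^ 2 - 1) ((d g ^ 2 - 1) * (d h ^ 2 - 1))"
      unfolding N_fgh_def S0_fg_def S_fgh_def by auto
    show "N_fgh d w \<rho> f g h \<alpha> \<beta> $$ (r, j) = (\<Sum>s<n. of_real (p s) * X s r * Z s j)"
      if "r < d f ^ 2 - 1" "j < (d g ^ 2 - 1) * (d h ^ 2 - 1)" for r j
      unfolding X_def Y_def Z_def
      by (rule N_fgh_entry_separable[OF tcoef_assign_separable[OF d0 perm \<rho>] that])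
    show "L2_set (\<lambda>r. cmod (X s r)) {..<d f ^ 2 - 1} \<le> sqrt (real (d f) - 1)" if "s < n" for s
      unfolding X_def using sp that by (intro density_pauli_coeff_L2_le[OF w(1) d(1)]) auto
    show "L2_set (\<lambda>j. cmod (Z s j)) {..<(d g ^ 2 - 1) * (d h ^ 2 - 1)}
        \<le> \<bar>\<alpha>\<bar> * sqrt (real (d g) - 1) + \<bar>\<beta>\<bar> * sqrt (real (d g) * real (d h) *
                            (1 - 1 / real (d g) ^ 2 - 1 / real (d h) ^ 2) + 1)" if "s < n" for s
      using sp that perm123_distinct(3)[OF perm] unfolding Z_def Y_def
      by (intro L2_set_column_le[OF mh] pair_coeff_bounds[OF w(2,3) d(2,3)]) auto
  qed (use sp p1 in auto)
qed

end
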